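(* Let $m\ge 2$, $\alpha>0$ and let $K\subset X_m$ be compact. For a finite index subgroup $\Lambda<\mathbb{Z}^m$ let $\mathcal{G}=C_{\mathbb{Z}^m/\Lambda}(I)$ (undirected case) or $\mathcal{G}=C^+_{\mathbb{Z}^m/\Lambda}(I)$ (directed case), let $\xi(\mathcal{G})=\big(|V_{\mathcal{G}}|^{-2}\sum_{x,y\in V_{\mathcal{G}}}d_{\mathcal{G}}^\alpha(x,y)\big)^{1/\alpha}$, and let $\zeta(L)=\big(\lambda(\mathbb{R}^m/L)^{-1}\int_{\mathbb{R}^m/L}d^\alpha_{\mathbb{R}^m/L}(0,x)\,d\lambda(x)\big)^{1/\alpha}$ for lattices $L<\mathbb{R}^m$, with the distance (resp. non-symmetric distance) of the corresponding case. Then for every $\varepsilon>0$ there is $N$ such that for every finite index subgroup $\Lambda<\mathbb{Z}^m$ with $\bar\Lambda\in K$ and $|\Lambda|>N$, $\big||\Lambda|^{-1/m}\xi(\mathcal{G})-\zeta(\bar\Lambda)\big|<\varepsilon$.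
   Context: $X_m$ is the space of covolume-one lattices in $\mathbb{R}^m$ (standard topology). $I$ is the standard basis of $\mathbb{Z}^m$; Cayley graph/digraph as usual with graph metric or directed path distance $d_{\mathcal{G}}$. $|\Lambda|$ is the index, $\bar\Lambda=|\Lambda|^{-1/m}\Lambda$. $\mathbf{B}=\{v:\sum|v_i|<1\}$ (undirected) or $\{v:v_i\ge0,\ \sum v_i<1\}$ (directed); $d_{\mathbb{R}^m}(x,y)=\inf\{t>0:y\in x+t\mathbf{B}\}$; $d_{\mathbb{R}^m/L}(x+L,y+L)=\inf_{v\in L}d_{\mathbb{R}^m}(x,y+v)$; $\lambda$ is Lebesgue measure. *)

theory Defs
  imports "HOL-Analysis.Analysis"
begin

definition lattice_of :: "real^'m^'m \<Rightarrow> (real^'m) set" where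
  "lattice_of A = {A *v (\<chi> i. real_of_int (z $ i)) | z :: int^'m. True}"

definition unimod :: "(real^'m^'m) set" where
  "unimod = {A. \<bar>det A\<bar> = 1}"

definition Xm :: "(real^'m) set set" where
  "Xm = lattice_of ` (unimod :: (real^'m^'m) set)"

definition Xm_top :: "(real^'m) set topology" where
  "Xm_top = topology (\<lambda>U. U \<subseteq> Xm \<and>
      openin (top_of_set (unimod :: (real^'m^'m) set)) {A \<in> unimod. lattice_of A \<in> U})"

definition subgroup_Zm :: "(int^'m) set \<Rightarrow> bool" where
  "subgroup_Zm H \<longleftrightarrow> 0 \<in> H \<and> (\<forall>a\<in>H. \<forall>b\<in>H. a + b \<in> H \<and> - a \<in> H)"

definition cosets_Zm :: "(int^'m) set \<Rightarrow> (int^'m) set set" where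
  "cosets_Zm H = range (\<lambda>x. (\<lambda>y. x + y) ` H)"

definition index_Zm :: "(int^'m) set \<Rightarrow> nat" where
  "index_Zm H = card (cosets_Zm H)"

definition finite_index_subgroup :: "(int^'m) set \<Rightarrow> bool" where
  "finite_index_subgroup H \<longleftrightarrow> subgroup_Zm H \<and> finite (cosets_Zm H)"

definition lattice_bar :: "(int^'m) set \<Rightarrow> (real^'m) set" where
  "lattice_bar H = (\<lambda>z. (real (index_Zm H) powr (- 1 / real CARD('m))) *\<^sub>R
                         (\<chi> i. real_of_int (z $ i))) ` H"

definition cayley_arc :: "(int^'m) set \<Rightarrow> (int^'m) set \<Rightarrow> bool" where
  "cayley_arc X Y \<longleftrightarrow> (\<exists>j. Y = (\<lambda>v. v + axis j 1) ` X)"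

definition cayley_adj :: "bool \<Rightarrow> (int^'m) set \<Rightarrow> (int^'m) set \<Rightarrow> bool" where
  "cayley_adj directed X Y \<longleftrightarrow>
     (if directed then cayley_arc X Y else cayley_arc X Y \<or> cayley_arc Y X)"

definition dist_G :: "bool \<Rightarrow> (int^'m) set \<Rightarrow> (int^'m) set \<Rightarrow> (int^'m) set \<Rightarrow> nat" where
  "dist_G directed H X Y = (LEAST n. \<exists>p. p 0 = X \<and> p n = Y \<and>
      (\<forall>i<n. p i \<in> cosets_Zm H \<and> p (Suc i) \<in> cosets_Zm H \<and> cayley_adj directed (p i) (p (Suc i))))"

definition xi_G :: "bool \<Rightarrow> real \<Rightarrow> (int^'m) set \<Rightarrow> real" where
  "xi_G directed \<alpha> H =
     ((1 / (real (card (cosets_Zm H)))\<^sup>2) *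
       (\<Sum>X\<in>cosets_Zm H. \<Sum>Y\<in>cosets_Zm H. real (dist_G directed H X Y) powr \<alpha>)) powr (1 / \<alpha>)"

definition Bset :: "bool \<Rightarrow> (real^'m) set" where
  "Bset directed = (if directed then {v. (\<forall>i. 0 \<le> v $ i) \<and> (\<Sum>i\<in>UNIV. v $ i) < 1}
                    else {v. (\<Sum>i\<in>UNIV. \<bar>v $ i\<bar>) < 1})"

definition dist_R :: "bool \<Rightarrow> real^'m \<Rightarrow> real^'m \<Rightarrow> ereal" where
  "dist_R directed x y = Inf {ereal t | t. t > 0 \<and> y \<in> (\<lambda>b. x + t *\<^sub>R b) ` Bset directed}"

definition dist_quot :: "bool \<Rightarrow> (real^'m) set \<Rightarrow> real^'m \<Rightarrow> real^'m \<Rightarrow> ereal" where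
  "dist_quot directed L x y = Inf {dist_R directed x (y + v) | v. v \<in> L}"

text \<open>A measurable fundamental domain for the lattice L (used to realize R^m / L with Lebesgue measure).\<close>
definition fundamental_domain :: "(real^'m) set \<Rightarrow> (real^'m) set \<Rightarrow> bool" where
  "fundamental_domain L F \<longleftrightarrow> F \<in> sets lebesgue \<and> (\<forall>x. \<exists>!v. v \<in> L \<and> x + v \<in> F)"

definition zeta_L :: "bool \<Rightarrow> real \<Rightarrow> (real^'m) set \<Rightarrow> real" where
  "zeta_L directed \<alpha> L =
     (let F = SOME F. fundamental_domain L F in
      ((1 / measure lebesgue F) *
        (LINT x:F|lebesgue. real_of_ereal (dist_quot directed L 0 x) powr \<alpha>)) powr (1 / \<alpha>))"

end

theory Submission
  imports Defs
begin

text \<open>Put \<open>h = |\<Lambda>|\<^sup>-\<^sup>1\<^sup>/\<^sup>m\<close>. A walk in the Cayley graph is a lattice path, so the graph distance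
  between the cosets of \<open>a\<close> and \<open>b\<close> is the least gauge (\<open>\<ell>\<^sub>1\<close>-norm, resp. coordinate sum on the
  positive orthant) of a lift of \<open>b - a\<close>; after scaling by \<open>h\<close> it is the quotient gauge of
  \<open>lattice_bar \<Lambda>\<close> at a point of the grid \<open>h \<int>\<^sup>m\<close>. Since the inner sum over \<open>Y\<close> does not depend on \<open>X\<close>,
  \<open>h \<xi>\<close> is the \<open>\<alpha>\<close>-power mean of the quotient gauge over the grid points modulo \<open>lattice_bar \<Lambda>\<close>. The
  function \<open>\<zeta>\<close> is the same power mean over a fundamental domain, which may be chosen as one grid
  cube of side \<open>h\<close> per coset. On each cube the gauge changes by at most \<open>m h\<close>, so the integral
  is squeezed between two Riemann sums over the grid. Compactness of \<open>K\<close> bounds the covering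
  radii of the lattices in \<open>K\<close>, hence the gauges, and uniform continuity of \<open>t \<mapsto> t\<^sup>\<alpha>\<close> and
  \<open>t \<mapsto> t\<^sup>1\<^sup>/\<^sup>\<alpha>\<close> on a bounded interval makes the two power means close once \<open>h\<close> is small.\<close>

section \<open>The gauge of the unit ball and of its quotients\<close>

definition of_int_vec :: "int^'m \<Rightarrow> real^'m" where
  "of_int_vec z = (\<chi> i. real_of_int (z $ i))"

lemma of_int_vec_add [simp]: "of_int_vec (a + b) = of_int_vec a + of_int_vec b"
  and of_int_vec_minus [simp]: "of_int_vec (- a) = - of_int_vec a"
  and of_int_vec_diff [simp]: "of_int_vec (a - b) = of_int_vec a - of_int_vec b"
  and of_int_vec_zero [simp]: "of_int_vec 0 = 0"
  and of_int_vec_nth [simp]: "of_int_vec z $ i = real_of_int (z $ i)"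
  and of_int_vec_axis [simp]: "of_int_vec (axis j 1) = axis j 1"
  by (auto simp: of_int_vec_def vec_eq_iff axis_def)

lemma of_int_vec_eq_iff: "of_int_vec a = of_int_vec b \<longleftrightarrow> a = b"
  by (auto simp: of_int_vec_def vec_eq_iff)

text \<open>The Minkowski functional of \<open>Bset d\<close>: the \<open>\<ell>\<^sub>1\<close>-norm in the undirected case; in the
  directed case the coordinate sum on the closed positive orthant and \<open>\<infinity>\<close> off it.\<close>
definition gauge :: "bool \<Rightarrow> real^'m \<Rightarrow> ereal" where
  "gauge d w = (if d then (if \<forall>i. 0 \<le> w $ i then ereal (\<Sum>i\<in>UNIV. w $ i) else \<infinity>)
                else ereal (\<Sum>i\<in>UNIV. \<bar>w $ i\<bar>))"

lemma Inf_ereal_greaterThan: "Inf {ereal t | t. s < t} = ereal s"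
proof (rule antisym)
  show "ereal s \<le> Inf {ereal t | t. s < t}" by (rule Inf_greatest) auto
  show "Inf {ereal t | t. s < t} \<le> ereal s"
  proof (rule ereal_le_epsilon2)
    fix e :: real assume "0 < e"
    hence "Inf {ereal t | t. s < t} \<le> ereal (s + e)" by (intro Inf_lower) auto
    thus "Inf {ereal t | t. s < t} \<le> ereal s + ereal e" by simp
  qed
qed

lemma dilates_Bset_eq:
  fixes w :: "real^'m"
  assumes "gauge d w = ereal s"
  shows "{ereal t | t. t > 0 \<and> w \<in> (\<lambda>b. t *\<^sub>R b) ` Bset d} = {ereal t | t. s < t}"
proof -
  have w: "if d then (\<forall>i. 0 \<le> w $ i) \<and> s = (\<Sum>i\<in>UNIV. w $ i) else s = (\<Sum>i\<in>UNIV. \<bar>w $ i\<bar>)"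
    using assms unfolding gauge_def by (auto split: if_splits)
  have s0: "0 \<le> s" using w by (auto split: if_splits intro: sum_nonneg)
  have "w \<in> (\<lambda>b. t *\<^sub>R b) ` Bset d \<longleftrightarrow> s < t" if "t > 0" for t
  proof -
    have "w \<in> (\<lambda>b. t *\<^sub>R b) ` Bset d \<longleftrightarrow> (1 / t) *\<^sub>R w \<in> Bset d"
      using that by (auto simp: image_iff intro!: bexI[of _ "(1 / t) *\<^sub>R w"])
    also have "\<dots> \<longleftrightarrow> s < t"
      using w that by (auto simp: Bset_def abs_mult sum_divide_distrib[symmetric] field_simps
          split: if_splits)
    finally show ?thesis .
  qed
  thus ?thesis using s0 by fastforce
qed

lemma dist_R_eq_gauge: "dist_R d x y = gauge d (y - x)"
proof -
  have img: "y \<in> (\<lambda>b. x + t *\<^sub>R b) ` Bset d \<longleftrightarrow> y - x \<in> (\<lambda>b. t *\<^sub>R b) ` Bset d" for t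
    by (auto simp: image_iff algebra_simps)
  show ?thesis
  proof (cases "gauge d (y - x) = \<infinity>")
    case True
    hence "d" "\<not> (\<forall>i. 0 \<le> (y - x) $ i)" unfolding gauge_def by (auto split: if_splits)
    have "y - x \<notin> (\<lambda>b. t *\<^sub>R b) ` Bset d" if "t > 0" for t
    proof
      assume "y - x \<in> (\<lambda>b. t *\<^sub>R b) ` Bset d"
      then obtain b where "b \<in> Bset d" "y - x = t *\<^sub>R b" by auto
      hence "\<forall>i. 0 \<le> (y - x) $ i" using that \<open>d\<close> by (simp add: Bset_def)
      thus False using \<open>\<not> (\<forall>i. 0 \<le> (y - x) $ i)\<close> by blast
    qed
    hence "{ereal t | t. t > 0 \<and> y \<in> (\<lambda>b. x + t *\<^sub>R b) ` Bset d} = {}"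
      unfolding img by auto
    hence "dist_R d x y = Inf {}" unfolding dist_R_def by metis
    thus ?thesis using True by (simp add: top_ereal_def)
  next
    case False
    then obtain s where "gauge d (y - x) = ereal s" unfolding gauge_def by (auto split: if_splits)
    thus ?thesis unfolding dist_R_def img dilates_Bset_eq[OF \<open>gauge d (y - x) = ereal s\<close>]
      by (simp add: Inf_ereal_greaterThan)
  qed
qed

lemma gauge_nonneg: "0 \<le> gauge d w"
  unfolding gauge_def by (auto simp: sum_nonneg)

lemma gauge_zero [simp]: "gauge d 0 = 0"
  unfolding gauge_def by (simp add: zero_ereal_def)

lemma gauge_of_nonneg: "(\<And>i. 0 \<le> w $ i) \<Longrightarrow> gauge d w = ereal (\<Sum>i\<in>UNIV. w $ i)"
  unfolding gauge_def by auto

lemma gauge_axis: "gauge d (axis j 1) = 1"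
  unfolding gauge_def by (auto simp: axis_def one_ereal_def)

lemma gauge_minus_axis: "gauge False (- axis j 1) = 1"
  unfolding gauge_def by (auto simp: axis_def one_ereal_def)

lemma gauge_add_le: "gauge d (a + b) \<le> gauge d a + gauge d b"
proof (cases "d \<and> \<not> ((\<forall>i. 0 \<le> a $ i) \<and> (\<forall>i. 0 \<le> b $ i))")
  case True
  thus ?thesis unfolding gauge_def
    using sum_nonneg[of UNIV "\<lambda>i. a $ i"] sum_nonneg[of UNIV "\<lambda>i. b $ i"] by auto
next
  case False
  have "(\<Sum>i\<in>UNIV. \<bar>(a + b) $ i\<bar>) \<le> (\<Sum>i\<in>UNIV. \<bar>a $ i\<bar>) + (\<Sum>i\<in>UNIV. \<bar>b $ i\<bar>)"
    by (simp add: sum.distrib[symmetric] sum_mono abs_triangle_ineq)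
  thus ?thesis using False unfolding gauge_def by (auto simp: sum.distrib)
qed

lemma gauge_scaleR: "c > 0 \<Longrightarrow> gauge d (c *\<^sub>R w) = ereal c * gauge d w"
  unfolding gauge_def by (auto simp: sum_distrib_left[symmetric] abs_mult zero_le_mult_iff)

lemma gauge_measurable [measurable]: "gauge d \<in> borel_measurable borel"
  unfolding gauge_def by measurable

lemma gauge_of_int_vec_nat:
  assumes "gauge d (of_int_vec z) \<noteq> \<infinity>"
  obtains k :: nat where "gauge d (of_int_vec z) = ereal (real k)"
proof -
  have "gauge d (of_int_vec z) = ereal (real (nat (\<Sum>i\<in>UNIV. if d then z $ i else \<bar>z $ i\<bar>)))"
    using assms unfolding gauge_def by (auto simp: sum_nonneg split: if_splits)
  thus ?thesis using that by blast
qed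

lemma gauge_of_int_vec_eq_0: "gauge d (of_int_vec s) = 0 \<Longrightarrow> s = 0"
  unfolding gauge_def
  by (auto simp: zero_ereal_def vec_eq_iff sum_nonneg_eq_0_iff split: if_splits)

lemma gauge_of_int_vec_Suc:
  fixes s :: "int^'m"
  assumes "gauge d (of_int_vec s) = ereal (real (Suc k))"
  obtains j where "d \<Longrightarrow> 0 < s $ j"
    "gauge d (of_int_vec (s - (if 0 < s $ j then axis j 1 else - axis j 1))) = ereal (real k)"
proof -
  have "s \<noteq> 0" using assms by (auto simp: zero_ereal_def)
  then obtain j where j: "s $ j \<noteq> 0" by (auto simp: vec_eq_iff)
  define e :: "int^'m" where "e = (if 0 < s $ j then axis j 1 else - axis j 1)"
  have other: "(s - e) $ i = s $ i" if "i \<noteq> j" for i using that by (simp add: e_def axis_def)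
  have at_j: "(s - e) $ j = (if 0 < s $ j then s $ j - 1 else s $ j + 1)" by (simp add: e_def axis_def)
  have split: "(\<Sum>i\<in>UNIV. f i) = f j + (\<Sum>i\<in>UNIV - {j}. f i)" for f :: "'m \<Rightarrow> real"
    by (simp add: sum.remove)
  show ?thesis
  proof (cases d)
    case True
    hence nonneg: "\<forall>i. 0 \<le> s $ i" and sum: "(\<Sum>i\<in>UNIV. real_of_int (s $ i)) = real (Suc k)"
      using assms unfolding gauge_def by (auto split: if_splits)
    have pos: "0 < s $ j" using nonneg j by (metis order.not_eq_order_implies_strict)
    have "\<forall>i. 0 \<le> (s - e) $ i" using nonneg pos other at_j by (metis diff_ge_0_iff_ge int_one_le_iff_zero_less)
    moreover have "(\<Sum>i\<in>UNIV. real_of_int ((s - e) $ i)) = real k"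
      using sum split[of "\<lambda>i. real_of_int ((s - e) $ i)"] split[of "\<lambda>i. real_of_int (s $ i)"] at_j pos other
      by simp
    ultimately have "gauge d (of_int_vec (s - e)) = ereal (real k)" using True unfolding gauge_def by simp
    thus ?thesis using that pos e_def by blast
  next
    case False
    hence sum: "(\<Sum>i\<in>UNIV. \<bar>real_of_int (s $ i)\<bar>) = real (Suc k)"
      using assms unfolding gauge_def by auto
    have "\<bar>real_of_int ((s - e) $ j)\<bar> = \<bar>real_of_int (s $ j)\<bar> - 1" using at_j j by auto
    hence "(\<Sum>i\<in>UNIV. \<bar>real_of_int ((s - e) $ i)\<bar>) = real k"
      using sum split[of "\<lambda>i. \<bar>real_of_int ((s - e) $ i)\<bar>"] split[of "\<lambda>i. \<bar>real_of_int (s $ i)\<bar>"] other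
      by simp
    thus ?thesis using that False unfolding gauge_def e_def by simp
  qed
qed

definition additive_subgroup :: "'a::ab_group_add set \<Rightarrow> bool" where
  "additive_subgroup L \<longleftrightarrow> 0 \<in> L \<and> (\<forall>a\<in>L. \<forall>b\<in>L. a + b \<in> L) \<and> (\<forall>a\<in>L. - a \<in> L)"

lemma additive_subgroupD:
  assumes "additive_subgroup H"
  shows "0 \<in> H" "a \<in> H \<Longrightarrow> b \<in> H \<Longrightarrow> a + b \<in> H" "a \<in> H \<Longrightarrow> - a \<in> H"
    "a \<in> H \<Longrightarrow> b \<in> H \<Longrightarrow> a - b \<in> H"
  using assms unfolding additive_subgroup_def by (auto, metis diff_conv_add_uminus)

definition quot_gauge :: "bool \<Rightarrow> (real^'m) set \<Rightarrow> real^'m \<Rightarrow> ereal" where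
  "quot_gauge d L x = (INF v\<in>L. gauge d (x + v))"

lemma dist_quot_0_eq_quot_gauge: "dist_quot d L 0 x = quot_gauge d L x"
proof -
  have "{dist_R d 0 (x + v) | v. v \<in> L} = (\<lambda>v. gauge d (x + v)) ` L"
    by (auto simp: dist_R_eq_gauge)
  thus ?thesis unfolding dist_quot_def quot_gauge_def by simp
qed

lemma quot_gauge_nonneg: "0 \<le> quot_gauge d L x"
  unfolding quot_gauge_def by (rule INF_greatest) (simp add: gauge_nonneg)

lemma quot_gauge_le: "v \<in> L \<Longrightarrow> quot_gauge d L x \<le> gauge d (x + v)"
  unfolding quot_gauge_def by (rule INF_lower)

lemma quot_gauge_translate:
  assumes "additive_subgroup L" "u \<in> L"
  shows "quot_gauge d L (x + u) = quot_gauge d L x"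
proof -
  have shift: "(\<lambda>v. u + v) ` L = L"
    using additive_subgroupD[OF assms(1)] assms(2)
    by (auto simp: image_iff intro!: bexI[of _ "- u + _"])
  have "quot_gauge d L (x + u) = (INF v\<in>L. gauge d (x + (u + v)))"
    unfolding quot_gauge_def by (simp add: add.assoc)
  also have "\<dots> = (INF w\<in>(\<lambda>v. u + v) ` L. gauge d (x + w))"
    by (simp add: image_image)
  finally show ?thesis unfolding shift quot_gauge_def .
qed

lemma quot_gauge_triangle:
  assumes "L \<noteq> {}"
  shows "quot_gauge d L y \<le> quot_gauge d L x + gauge d (y - x)"
proof (cases "gauge d (y - x) = \<infinity>")
  case True
  thus ?thesis using quot_gauge_nonneg[of d L x] by simp
next
  case False
  have fin: "gauge d (y - x) \<noteq> -\<infinity>" using gauge_nonneg[of d "y - x"] by auto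
  have "quot_gauge d L y \<le> (INF v\<in>L. gauge d (x + v) + gauge d (y - x))"
    unfolding quot_gauge_def
  proof (rule INF_mono)
    fix v assume "v \<in> L"
    have "gauge d (y + v) \<le> gauge d (x + v) + gauge d (y - x)"
      using gauge_add_le[of d "x + v" "y - x"] by (simp add: algebra_simps)
    thus "\<exists>v'\<in>L. gauge d (y + v') \<le> gauge d (x + v) + gauge d (y - x)" using \<open>v \<in> L\<close> by blast
  qed
  also have "\<dots> = quot_gauge d L x + gauge d (y - x)"
    unfolding quot_gauge_def by (rule INF_ereal_add_left[OF assms fin]) (simp add: gauge_nonneg)
  finally show ?thesis .
qed

lemma quot_gauge_measurable [measurable]:
  "countable L \<Longrightarrow> quot_gauge d L \<in> borel_measurable lebesgue"
  unfolding quot_gauge_def by (rule measurable_completion) measurable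

section \<open>Integrals of periodic functions over fundamental domains\<close>

lemma lebesgue_eq_distr_translation:
  "(lebesgue :: (real^'m) measure) = distr lebesgue lebesgue (\<lambda>x. t + x)"
  using lebesgue_affine_euclidean[of "\<lambda>_. 1::real" t]
  by (simp add: euclidean_representation density_1)

lemma measurable_lebesgue_translation [measurable]:
  "(\<lambda>x::real^'m. t + x) \<in> lebesgue \<rightarrow>\<^sub>M lebesgue"
  using lebesgue_affine_measurable[of "\<lambda>_. 1::real" t] by (simp add: euclidean_representation)

lemma measurable_lebesgue_translation' [measurable]:
  "(\<lambda>x::real^'m. x + t) \<in> lebesgue \<rightarrow>\<^sub>M lebesgue"
  using measurable_lebesgue_translation[of t] by (simp add: add.commute)

lemma nn_integral_lebesgue_translation:
  fixes G :: "real^'m \<Rightarrow> ennreal"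
  assumes "G \<in> borel_measurable lebesgue"
  shows "(\<integral>\<^sup>+x. G x \<partial>lebesgue) = (\<integral>\<^sup>+x. G (t + x) \<partial>lebesgue)"
  using assms
  by (subst lebesgue_eq_distr_translation[of t]) (simp add: nn_integral_distr)

lemma suminf_indicator_fundamental_domain:
  fixes e :: "nat \<Rightarrow> real^'m"
  assumes "bij_betw e UNIV L" "fundamental_domain L F"
  shows "(\<Sum>k. indicator F (x + e k) :: ennreal) = 1"
proof -
  obtain v where v: "v \<in> L" "x + v \<in> F" and uniq: "\<And>w. w \<in> L \<Longrightarrow> x + w \<in> F \<Longrightarrow> w = v"
    using assms(2) unfolding fundamental_domain_def by metis
  obtain k0 where k0: "e k0 = v" using assms(1) v(1) by (metis bij_betw_inv_into_right)
  have "(\<Sum>k. indicator F (x + e k) :: ennreal) = (\<Sum>k\<in>{k0}. indicator F (x + e k))"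
  proof (rule suminf_finite)
    fix k assume "k \<notin> {k0}"
    hence "e k \<noteq> e k0" using assms(1) by (metis UNIV_I bij_betw_imp_inj_on inj_on_def singletonI)
    moreover have "e k \<in> L" using assms(1) by (metis UNIV_I bij_betw_apply)
    ultimately show "indicator F (x + e k) = (0::ennreal)" using uniq k0 by (auto simp: indicator_def)
  qed simp
  thus ?thesis using k0 v by simp
qed

text \<open>Unfolding \<open>F\<^sub>1\<close> along the translates of \<open>F\<^sub>2\<close> and translating each piece back, the
  integral over \<open>F\<^sub>1\<close> becomes one over \<open>F\<^sub>2\<close>.\<close>
lemma nn_integral_fundamental_domain_eq:
  fixes g :: "real^'m \<Rightarrow> ennreal"
  assumes L: "countable L" "infinite L" "additive_subgroup L"
    and F1: "fundamental_domain L F1" and F2: "fundamental_domain L F2"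
    and g [measurable]: "g \<in> borel_measurable lebesgue"
    and periodic: "\<And>x v. v \<in> L \<Longrightarrow> g (x + v) = g x"
  shows "(\<integral>\<^sup>+x. g x * indicator F1 x \<partial>lebesgue) = (\<integral>\<^sup>+x. g x * indicator F2 x \<partial>lebesgue)"
proof -
  define e where "e = from_nat_into L"
  have e: "bij_betw e UNIV L" unfolding e_def using L by (simp add: bij_betw_from_nat_into)
  have eL: "e k \<in> L" for k using e by (metis UNIV_I bij_betw_apply)
  have minus_e: "bij_betw (\<lambda>k. - e k) UNIV L"
  proof -
    have "bij_betw uminus L L"
      by (rule bij_betwI[of _ _ _ uminus]) (auto simp: additive_subgroupD(3)[OF L(3)])
    from bij_betw_trans[OF e this] show ?thesis by (simp add: o_def)
  qed
  have [measurable]: "F1 \<in> sets lebesgue" "F2 \<in> sets lebesgue"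
    using F1 F2 unfolding fundamental_domain_def by auto
  have "(\<integral>\<^sup>+x. g x * indicator F1 x \<partial>lebesgue)
      = (\<integral>\<^sup>+x. (\<Sum>k. g x * indicator F1 x * indicator F2 (x + e k)) \<partial>lebesgue)"
    by (simp add: ennreal_suminf_cmult suminf_indicator_fundamental_domain[OF e F2])
  also have "\<dots> = (\<Sum>k. \<integral>\<^sup>+x. g x * indicator F1 x * indicator F2 (x + e k) \<partial>lebesgue)"
    by (rule nn_integral_suminf) measurable
  also have "\<dots> = (\<Sum>k. \<integral>\<^sup>+x. g x * indicator F2 x * indicator F1 (x + - e k) \<partial>lebesgue)"
  proof (rule suminf_cong)
    fix k
    have "(\<integral>\<^sup>+x. g x * indicator F1 x * indicator F2 (x + e k) \<partial>lebesgue)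
       = (\<integral>\<^sup>+x. g (- e k + x) * indicator F1 (- e k + x) * indicator F2 (- e k + x + e k) \<partial>lebesgue)"
      by (rule nn_integral_lebesgue_translation) measurable
    also have "\<dots> = (\<integral>\<^sup>+x. g x * indicator F2 x * indicator F1 (x + - e k) \<partial>lebesgue)"
      using periodic[OF additive_subgroupD(3)[OF L(3) eL[of k]]] by (simp add: add.commute mult_ac)
    finally show "(\<integral>\<^sup>+x. g x * indicator F1 x * indicator F2 (x + e k) \<partial>lebesgue)
       = (\<integral>\<^sup>+x. g x * indicator F2 x * indicator F1 (x + - e k) \<partial>lebesgue)" .
  qed
  also have "\<dots> = (\<integral>\<^sup>+x. (\<Sum>k. g x * indicator F2 x * indicator F1 (x + - e k)) \<partial>lebesgue)"
    by (rule nn_integral_suminf[symmetric]) measurable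
  also have "\<dots> = (\<integral>\<^sup>+x. g x * indicator F2 x \<partial>lebesgue)"
  proof -
    have "(\<Sum>k. indicator F1 (x - e k) :: ennreal) = 1" for x
      using suminf_indicator_fundamental_domain[OF minus_e F1, of x] by simp
    thus ?thesis by (simp add: ennreal_suminf_cmult)
  qed
  finally show ?thesis .
qed

lemma subgroup_Zm_additive_subgroup: "subgroup_Zm H \<Longrightarrow> additive_subgroup H"
  unfolding subgroup_Zm_def additive_subgroup_def by auto

lemma mem_coset_iff:
  assumes "additive_subgroup (H :: 'a::ab_group_add set)"
  shows "b \<in> (+) a ` H \<longleftrightarrow> b - a \<in> H"
  by (auto simp: image_iff) (metis add_diff_cancel_left' diff_add_cancel add.commute)

lemma coset_self: "additive_subgroup H \<Longrightarrow> a \<in> (+) a ` H"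
  using additive_subgroupD(1) by force

lemma coset_eq_iff:
  assumes "additive_subgroup (H :: 'a::ab_group_add set)"
  shows "(+) a ` H = (+) b ` H \<longleftrightarrow> a - b \<in> H"
proof
  assume "(+) a ` H = (+) b ` H"
  thus "a - b \<in> H" using coset_self[OF assms, of a] mem_coset_iff[OF assms] by simp
next
  assume ab: "a - b \<in> H"
  have "x - a \<in> H \<longleftrightarrow> x - b \<in> H" for x
    using additive_subgroupD(2,4)[OF assms _ ab]
    by (metis diff_add_cancel add_diff_eq diff_diff_eq2)
  thus "(+) a ` H = (+) b ` H" using mem_coset_iff[OF assms] by blast
qed

lemma translate_coset: "(\<lambda>v. v + c) ` ((+) a ` H) = (+) (a + c) ` (H :: 'a::ab_group_add set)"
  by (auto simp: image_iff algebra_simps)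

lemma coset_in_cosets_Zm: "(+) a ` H \<in> cosets_Zm H"
  unfolding cosets_Zm_def by auto

definition rep :: "'a set \<Rightarrow> 'a" where
  "rep Y = (SOME a. a \<in> Y)"

lemma rep_coset:
  assumes "additive_subgroup H" "Y \<in> cosets_Zm H"
  shows "rep Y \<in> Y" "Y = (+) (rep Y) ` H"
proof -
  obtain a where a: "Y = (+) a ` H" using assms(2) unfolding cosets_Zm_def by auto
  hence "a \<in> Y" using coset_self[OF assms(1)] by simp
  thus "rep Y \<in> Y" unfolding rep_def by (rule someI)
  hence "rep Y - a \<in> H" using a mem_coset_iff[OF assms(1)] by simp
  hence "a - rep Y \<in> H" using additive_subgroupD(3)[OF assms(1)] by (metis minus_diff_eq)
  thus "Y = (+) (rep Y) ` H" using a coset_eq_iff[OF assms(1)] by simp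
qed

lemma finite_index_subgroup_infinite:
  assumes "finite_index_subgroup (H :: (int^'m) set)"
  shows "infinite H"
proof
  assume "finite H"
  have "(UNIV :: (int^'m) set) \<subseteq> \<Union> (cosets_Zm H)"
    using coset_self[OF subgroup_Zm_additive_subgroup] assms
    unfolding finite_index_subgroup_def cosets_Zm_def by blast
  moreover have "finite (\<Union> (cosets_Zm H))"
    using assms \<open>finite H\<close> unfolding finite_index_subgroup_def cosets_Zm_def by auto
  ultimately have "finite (UNIV :: (int^'m) set)" by (rule finite_subset)
  thus False using infinite_UNIV_vec[where 'a=int and 'b='m] by simp
qed

text \<open>The half-open cubes \<open>[0,h)\<^sup>m\<close> (\<open>s = True\<close>) and \<open>(-h,0]\<^sup>m\<close> (\<open>s = False\<close>). Points of the
  first lie above their grid corner and points of the second below it, which is what the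
  directed gauge needs for the upper and the lower bound respectively.\<close>
definition tile :: "bool \<Rightarrow> real \<Rightarrow> (real^'m) set" where
  "tile s h = {y. \<forall>i. if s then 0 \<le> y $ i \<and> y $ i < h else - h < y $ i \<and> y $ i \<le> 0}"

lemma tile_grid_exists:
  assumes "h > 0"
  shows "\<exists>z. y - h *\<^sub>R of_int_vec z \<in> tile s h"
proof (cases s)
  case True
  have "0 \<le> y $ i - h * \<lfloor>y $ i / h\<rfloor> \<and> y $ i - h * \<lfloor>y $ i / h\<rfloor> < h" for i
  proof -
    have "real_of_int \<lfloor>y $ i / h\<rfloor> \<le> y $ i / h" "y $ i / h < real_of_int \<lfloor>y $ i / h\<rfloor> + 1"
      by linarith+
    from mult_left_mono[OF this(1), of h] mult_strict_left_mono[OF this(2), of h]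
    show ?thesis using assms by (simp add: algebra_simps)
  qed
  thus ?thesis using True by (intro exI[of _ "\<chi> i. \<lfloor>y $ i / h\<rfloor>"]) (simp add: tile_def)
next
  case False
  have "- h < y $ i - h * \<lceil>y $ i / h\<rceil> \<and> y $ i - h * \<lceil>y $ i / h\<rceil> \<le> 0" for i
  proof -
    have "y $ i / h \<le> real_of_int \<lceil>y $ i / h\<rceil>" "real_of_int \<lceil>y $ i / h\<rceil> < y $ i / h + 1"
      by linarith+
    from mult_left_mono[OF this(1), of h] mult_strict_left_mono[OF this(2), of h]
    show ?thesis using assms by (simp add: algebra_simps)
  qed
  thus ?thesis using False by (intro exI[of _ "\<chi> i. \<lceil>y $ i / h\<rceil>"]) (simp add: tile_def)
qed

lemma tile_grid_unique:
  assumes "h > 0" "y - h *\<^sub>R of_int_vec z1 \<in> tile s h" "y - h *\<^sub>R of_int_vec z2 \<in> tile s h"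
  shows "z1 = z2"
proof -
  have "z1 $ i = z2 $ i" for i
  proof -
    have "if s then 0 \<le> y $ i - h * z1 $ i \<and> y $ i - h * z1 $ i < h
          else - h < y $ i - h * z1 $ i \<and> y $ i - h * z1 $ i \<le> 0"
      "if s then 0 \<le> y $ i - h * z2 $ i \<and> y $ i - h * z2 $ i < h
          else - h < y $ i - h * z2 $ i \<and> y $ i - h * z2 $ i \<le> 0"
      using assms(2,3) unfolding tile_def by auto
    hence "\<bar>h * (z1 $ i - z2 $ i)\<bar> < h"
      by (cases s) (auto simp: abs_less_iff algebra_simps)
    hence "\<bar>real_of_int (z1 $ i - z2 $ i)\<bar> < 1" using assms(1) by (simp add: abs_mult)
    thus ?thesis by linarith
  qed
  thus ?thesis by (simp add: vec_eq_iff)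
qed

lemma tile_sets_borel [measurable]: "tile s h \<in> sets borel"
  unfolding tile_def by measurable

lemma tile_sets_lebesgue [measurable]: "tile s h \<in> sets lebesgue"
proof -
  have "tile s h \<in> sets lborel" by simp
  thus ?thesis by (rule sets_completionI_sets)
qed

lemma emeasure_tile:
  assumes "h > 0"
  shows "0 < emeasure lebesgue (tile s h :: (real^'m) set)"
    "emeasure lebesgue (tile s h :: (real^'m) set) < \<infinity>"
proof -
  define lo :: "real^'m" where "lo = vec (if s then 0 else - h)"
  define hi :: "real^'m" where "hi = vec (if s then h else 0)"
  have eq: "emeasure lebesgue (tile s h :: (real^'m) set) = emeasure lborel (tile s h :: (real^'m) set)"
    by simp
  have "box lo hi \<subseteq> tile s h"
    unfolding lo_def hi_def tile_def by (auto simp: mem_box_cart) (metis less_imp_le)+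
  have "emeasure lborel (box lo hi) = (\<Prod>b\<in>Basis. (hi - lo) \<bullet> b)"
    using assms by (intro emeasure_lborel_box) (auto simp: lo_def hi_def Basis_vec_def inner_axis)
  also have "\<dots> > 0"
    using assms by (auto simp: lo_def hi_def Basis_vec_def inner_axis intro!: prod_pos)
  also have "emeasure lborel (box lo hi) \<le> emeasure lborel (tile s h :: (real^'m) set)"
    using \<open>box lo hi \<subseteq> tile s h\<close> by (rule emeasure_mono) simp
  finally show "0 < emeasure lebesgue (tile s h :: (real^'m) set)" using eq by simp
  have "x $ i \<in> {- h..h}" if "x \<in> tile s h" for x :: "real^'m" and i
    using that assms unfolding tile_def by (cases s) (auto dest: spec[of _ i])
  hence "tile s h \<subseteq> cbox (vec (- h)) (vec h :: real^'m)" by (auto simp: mem_box_cart)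
  hence "bounded (tile s h :: (real^'m) set)" using bounded_cbox bounded_subset by blast
  thus "emeasure lebesgue (tile s h :: (real^'m) set) < \<infinity>"
    using emeasure_bounded_finite eq by simp
qed

lemma gauge_tile_le:
  fixes x :: "real^'m"
  assumes "x \<in> tile s h"
  shows "gauge d (if s then x else - x) \<le> ereal (real CARD('m) * h)"
proof -
  define y where "y = (if s then x else - x)"
  have y: "0 \<le> y $ i \<and> y $ i \<le> h" for i
    using assms unfolding tile_def y_def by (cases s) (auto dest: spec[of _ i])
  have "gauge d y = ereal (\<Sum>i\<in>UNIV. y $ i)" using y by (intro gauge_of_nonneg) auto
  also have "(\<Sum>i\<in>UNIV. y $ i) \<le> (\<Sum>i\<in>(UNIV::'m set). h)" by (rule sum_mono) (use y in auto)
  finally show ?thesis unfolding y_def by simp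
qed

definition scale :: "(int^'m) set \<Rightarrow> real" where
  "scale H = real (index_Zm H) powr (- 1 / real CARD('m))"

definition tiled_domain :: "bool \<Rightarrow> (int^'m) set \<Rightarrow> (real^'m) set" where
  "tiled_domain s H = (\<Union>Y\<in>cosets_Zm H. (+) (scale H *\<^sub>R of_int_vec (rep Y)) ` tile s (scale H))"

locale finite_index_Zm =
  fixes H :: "(int^'m) set"
  assumes finite_index: "finite_index_subgroup H"
begin

lemma subgroup: "additive_subgroup H"
  using finite_index subgroup_Zm_additive_subgroup unfolding finite_index_subgroup_def by auto

lemma finite_cosets: "finite (cosets_Zm H)"
  using finite_index unfolding finite_index_subgroup_def by auto

lemma index_pos: "index_Zm H > 0"
  using coset_in_cosets_Zm finite_cosets card_gt_0_iff unfolding index_Zm_def by blast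

lemma scale_pos: "scale H > 0"
  unfolding scale_def using index_pos by simp

lemma lattice_bar_eq: "lattice_bar H = (\<lambda>z. scale H *\<^sub>R of_int_vec z) ` H"
  unfolding lattice_bar_def scale_def of_int_vec_def by simp

lemma scaled_mem_lattice_bar_iff: "scale H *\<^sub>R of_int_vec z \<in> lattice_bar H \<longleftrightarrow> z \<in> H"
proof -
  have "scale H *\<^sub>R of_int_vec z = scale H *\<^sub>R of_int_vec z' \<longleftrightarrow> z = z'" for z'
    using scale_pos of_int_vec_eq_iff by auto
  thus ?thesis unfolding lattice_bar_eq by auto
qed

lemma additive_subgroup_lattice_bar: "additive_subgroup (lattice_bar H)"
  unfolding additive_subgroup_def lattice_bar_eq
proof (intro conjI ballI)
  show "0 \<in> (\<lambda>z. scale H *\<^sub>R of_int_vec z) ` H"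
    using additive_subgroupD(1)[OF subgroup] by (intro image_eqI[of _ _ 0]) auto
next
  fix x y assume "x \<in> (\<lambda>z. scale H *\<^sub>R of_int_vec z) ` H" "y \<in> (\<lambda>z. scale H *\<^sub>R of_int_vec z) ` H"
  then obtain a b where "a \<in> H" "b \<in> H" "x = scale H *\<^sub>R of_int_vec a" "y = scale H *\<^sub>R of_int_vec b"
    by auto
  thus "x + y \<in> (\<lambda>z. scale H *\<^sub>R of_int_vec z) ` H"
    using additive_subgroupD(2)[OF subgroup] by (intro image_eqI[of _ _ "a + b"]) (auto simp: scaleR_add_right)
next
  fix x assume "x \<in> (\<lambda>z. scale H *\<^sub>R of_int_vec z) ` H"
  then obtain a where "a \<in> H" "x = scale H *\<^sub>R of_int_vec a" by auto
  thus "- x \<in> (\<lambda>z. scale H *\<^sub>R of_int_vec z) ` H"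
    using additive_subgroupD(3)[OF subgroup] by (intro image_eqI[of _ _ "- a"]) auto
qed

lemma countable_lattice_bar: "countable (lattice_bar H)"
  unfolding lattice_bar_eq by simp

lemma infinite_lattice_bar: "infinite (lattice_bar H)"
proof -
  have "inj_on (\<lambda>z. scale H *\<^sub>R of_int_vec z) H"
    using scale_pos of_int_vec_eq_iff by (auto simp: inj_on_def)
  thus ?thesis
    unfolding lattice_bar_eq using finite_index_subgroup_infinite[OF finite_index] finite_imageD by blast
qed

lemma coset_rep: "Y \<in> cosets_Zm H \<Longrightarrow> Y = (+) (rep Y) ` H"
  using rep_coset[OF subgroup] by auto

lemma diff_rep_mem: "z \<in> Y \<Longrightarrow> Y \<in> cosets_Zm H \<Longrightarrow> z - rep Y \<in> H"
  using coset_rep mem_coset_iff[OF subgroup] by metis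

lemma tile_decomposition_unique:
  assumes "Y1 \<in> cosets_Zm H" "Y2 \<in> cosets_Zm H" "u1 \<in> H" "u2 \<in> H"
    and "y - scale H *\<^sub>R of_int_vec (rep Y1 - u1) \<in> tile s (scale H)"
    and "y - scale H *\<^sub>R of_int_vec (rep Y2 - u2) \<in> tile s (scale H)"
  shows "Y1 = Y2 \<and> u1 = u2"
proof -
  have eq: "rep Y1 - u1 = rep Y2 - u2" using tile_grid_unique[OF scale_pos assms(5,6)] .
  hence "rep Y1 - rep Y2 = u1 - u2" by (simp add: algebra_simps)
  hence "rep Y1 - rep Y2 \<in> H" using additive_subgroupD(4)[OF subgroup assms(3,4)] by simp
  hence "Y1 = Y2" using assms(1,2) coset_rep coset_eq_iff[OF subgroup] by metis
  thus ?thesis using eq by simp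
qed

lemma tiled_domain_sets [measurable]: "tiled_domain s H \<in> sets lebesgue"
  unfolding tiled_domain_def using finite_cosets
  by (intro sets.finite_UN lebesgue_sets_translation tile_sets_lebesgue) auto

lemma fundamental_domain_tiled_domain: "fundamental_domain (lattice_bar H) (tiled_domain s H)"
  unfolding fundamental_domain_def
proof (intro conjI allI tiled_domain_sets)
  fix y :: "real^'m"
  obtain z where z: "y - scale H *\<^sub>R of_int_vec z \<in> tile s (scale H)"
    using tile_grid_exists[OF scale_pos] by blast
  define Y where "Y = (+) z ` H"
  have Y: "Y \<in> cosets_Zm H" unfolding Y_def by (rule coset_in_cosets_Zm)
  have u: "z - rep Y \<in> H" using diff_rep_mem[OF _ Y] coset_self[OF subgroup] Y_def by blast
  define v where "v = scale H *\<^sub>R of_int_vec (- (z - rep Y))"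
  have vL: "v \<in> lattice_bar H"
    unfolding v_def scaled_mem_lattice_bar_iff using additive_subgroupD(3)[OF subgroup u] .
  have "y + v = scale H *\<^sub>R of_int_vec (rep Y) + (y - scale H *\<^sub>R of_int_vec z)"
    unfolding v_def by (simp add: algebra_simps)
  hence "y + v \<in> tiled_domain s H" unfolding tiled_domain_def using Y z by blast
  moreover have "w = v" if w: "w \<in> lattice_bar H" "y + w \<in> tiled_domain s H" for w
  proof -
    obtain u2 where u2: "u2 \<in> H" "w = scale H *\<^sub>R of_int_vec u2" using w(1) unfolding lattice_bar_eq by auto
    obtain Y2 c where Y2: "Y2 \<in> cosets_Zm H" "c \<in> tile s (scale H)"
      "y + w = scale H *\<^sub>R of_int_vec (rep Y2) + c"
      using w(2) unfolding tiled_domain_def by auto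
    have "y - scale H *\<^sub>R of_int_vec (rep Y2 - u2) \<in> tile s (scale H)"
      using Y2 u2 by (simp add: algebra_simps scaleR_diff_right)
    moreover have "y - scale H *\<^sub>R of_int_vec (rep Y - (- (z - rep Y))) \<in> tile s (scale H)"
      using z by simp
    ultimately have "u2 = - (z - rep Y)"
      using tile_decomposition_unique[OF Y Y2(1) additive_subgroupD(3)[OF subgroup u] u2(1)] by auto
    thus ?thesis using u2 v_def by simp
  qed
  ultimately show "\<exists>!v. v \<in> lattice_bar H \<and> y + v \<in> tiled_domain s H" using vL by blast
qed

lemma disjoint_tiles:
  "disjoint_family_on (\<lambda>Y. (+) (scale H *\<^sub>R of_int_vec (rep Y)) ` tile s (scale H)) (cosets_Zm H)"
  unfolding disjoint_family_on_def
proof (intro ballI impI)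
  fix Y1 Y2 assume Y: "Y1 \<in> cosets_Zm H" "Y2 \<in> cosets_Zm H" "Y1 \<noteq> Y2"
  show "(+) (scale H *\<^sub>R of_int_vec (rep Y1)) ` tile s (scale H) \<inter>
        (+) (scale H *\<^sub>R of_int_vec (rep Y2)) ` tile s (scale H) = {}"
  proof (rule ccontr)
    assume "\<not> ?thesis"
    then obtain x1 x2 where x: "x1 \<in> tile s (scale H)" "x2 \<in> tile s (scale H)"
      "scale H *\<^sub>R of_int_vec (rep Y1) + x1 = scale H *\<^sub>R of_int_vec (rep Y2) + x2"
      by auto
    define y where "y = scale H *\<^sub>R of_int_vec (rep Y1) + x1"
    have "y - scale H *\<^sub>R of_int_vec (rep Y1 - 0) = x1" unfolding y_def by simp
    moreover have "y - scale H *\<^sub>R of_int_vec (rep Y2 - 0) = x2" unfolding y_def x(3) by simp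
    ultimately have "y - scale H *\<^sub>R of_int_vec (rep Y1 - 0) \<in> tile s (scale H)"
      "y - scale H *\<^sub>R of_int_vec (rep Y2 - 0) \<in> tile s (scale H)"
      using x(1,2) by simp_all
    thus False
      using tile_decomposition_unique[OF Y(1,2) additive_subgroupD(1)[OF subgroup]
          additive_subgroupD(1)[OF subgroup]] Y(3) by blast
  qed
qed

lemma nn_integral_tiled_domain:
  fixes g :: "real^'m \<Rightarrow> ennreal"
  assumes g [measurable]: "g \<in> borel_measurable lebesgue"
  shows "(\<integral>\<^sup>+x. g x * indicator (tiled_domain s H) x \<partial>lebesgue)
       = (\<Sum>Y\<in>cosets_Zm H. \<integral>\<^sup>+x. g (scale H *\<^sub>R of_int_vec (rep Y) + x) * indicator (tile s (scale H)) x \<partial>lebesgue)"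
proof -
  let ?T = "\<lambda>Y. (+) (scale H *\<^sub>R of_int_vec (rep Y)) ` tile s (scale H)"
  have [measurable]: "?T Y \<in> sets lebesgue" for Y
    by (intro lebesgue_sets_translation tile_sets_lebesgue)
  have "(\<integral>\<^sup>+x. g x * indicator (tiled_domain s H) x \<partial>lebesgue)
      = (\<integral>\<^sup>+x. (\<Sum>Y\<in>cosets_Zm H. g x * indicator (?T Y) x) \<partial>lebesgue)"
    unfolding tiled_domain_def
    by (simp add: indicator_UN_disjoint[OF finite_cosets disjoint_tiles] sum_distrib_left)
  also have "\<dots> = (\<Sum>Y\<in>cosets_Zm H. \<integral>\<^sup>+x. g x * indicator (?T Y) x \<partial>lebesgue)"
    by (rule nn_integral_sum) measurable
  also have "\<dots> = (\<Sum>Y\<in>cosets_Zm H. \<integral>\<^sup>+x. g (scale H *\<^sub>R of_int_vec (rep Y) + x) * indicator (tile s (scale H)) x \<partial>lebesgue)"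
  proof (rule sum.cong[OF refl])
    fix Y
    have "(\<integral>\<^sup>+x. g x * indicator (?T Y) x \<partial>lebesgue)
       = (\<integral>\<^sup>+x. g (scale H *\<^sub>R of_int_vec (rep Y) + x) * indicator (?T Y) (scale H *\<^sub>R of_int_vec (rep Y) + x) \<partial>lebesgue)"
      by (rule nn_integral_lebesgue_translation) measurable
    also have "\<dots> = (\<integral>\<^sup>+x. g (scale H *\<^sub>R of_int_vec (rep Y) + x) * indicator (tile s (scale H)) x \<partial>lebesgue)"
      by (rule nn_integral_cong) (simp add: indicator_def image_iff)
    finally show "(\<integral>\<^sup>+x. g x * indicator (?T Y) x \<partial>lebesgue) = \<dots>" .
  qed
  finally show ?thesis .
qed

end

section \<open>Distances in the Cayley graph\<close>

context finite_index_Zm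
begin

definition walk :: "bool \<Rightarrow> nat \<Rightarrow> (int^'m) set \<Rightarrow> (int^'m) set \<Rightarrow> bool" where
  "walk d k X Y \<longleftrightarrow> (\<exists>p. p 0 = X \<and> p k = Y \<and>
      (\<forall>i<k. p i \<in> cosets_Zm H \<and> p (Suc i) \<in> cosets_Zm H \<and> cayley_adj d (p i) (p (Suc i))))"

lemma dist_G_eq_Least_walk: "dist_G d H X Y = (LEAST n. walk d n X Y)"
  unfolding dist_G_def walk_def ..

lemma cayley_adj_step_gauge:
  assumes "cayley_adj d ((+) (a + s) ` H) Y" "Y \<in> cosets_Zm H"
  obtains t where "Y = (+) (a + t) ` H" "gauge d (of_int_vec t) \<le> gauge d (of_int_vec s) + 1"
proof (cases "cayley_arc ((+) (a + s) ` H) Y")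
  case True
  then obtain j where "Y = (\<lambda>v. v + axis j 1) ` ((+) (a + s) ` H)" unfolding cayley_arc_def by auto
  hence "Y = (+) (a + (s + axis j 1)) ` H" by (metis translate_coset add.assoc)
  moreover have "gauge d (of_int_vec (s + axis j 1)) \<le> gauge d (of_int_vec s) + 1"
    using gauge_add_le[of d "of_int_vec s" "axis j 1"] by (simp add: gauge_axis)
  ultimately show ?thesis using that by blast
next
  case False
  hence "\<not> d" "cayley_arc Y ((+) (a + s) ` H)"
    using assms(1) unfolding cayley_adj_def by (auto split: if_splits)
  then obtain j where j: "(+) (a + s) ` H = (\<lambda>v. v + axis j 1) ` Y" unfolding cayley_arc_def by auto
  obtain c where c: "Y = (+) c ` H" using assms(2) unfolding cosets_Zm_def by auto
  have "(+) (c + axis j 1) ` H = (+) (a + s) ` H" using j c translate_coset by metis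
  hence "c + axis j 1 - (a + s) \<in> H" by (simp only: coset_eq_iff[OF subgroup])
  hence "c - (a + (s - axis j 1)) \<in> H" by (simp add: algebra_simps)
  hence "Y = (+) (a + (s - axis j 1)) ` H" using c coset_eq_iff[OF subgroup] by simp
  moreover have "gauge d (of_int_vec (s - axis j 1)) \<le> gauge d (of_int_vec s) + 1"
    using gauge_add_le[of d "of_int_vec s" "- axis j 1"] \<open>\<not> d\<close> by (simp add: gauge_minus_axis)
  ultimately show ?thesis using that by blast
qed

lemma walk_gauge_le:
  assumes "walk d k ((+) a ` H) Y"
  obtains s where "Y = (+) (a + s) ` H" "gauge d (of_int_vec s) \<le> ereal (real k)"
proof -
  obtain p where p: "p 0 = (+) a ` H" "p k = Y"
    "\<And>i. i < k \<Longrightarrow> p i \<in> cosets_Zm H \<and> p (Suc i) \<in> cosets_Zm H \<and> cayley_adj d (p i) (p (Suc i))"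
    using assms unfolding walk_def by blast
  have "\<exists>s. p i = (+) (a + s) ` H \<and> gauge d (of_int_vec s) \<le> ereal (real i)" if "i \<le> k" for i
    using that
  proof (induction i)
    case 0
    show ?case using p(1) by (intro exI[of _ 0]) simp
  next
    case (Suc i)
    then obtain s where s: "p i = (+) (a + s) ` H" "gauge d (of_int_vec s) \<le> ereal (real i)" by auto
    obtain t where "p (Suc i) = (+) (a + t) ` H" "gauge d (of_int_vec t) \<le> gauge d (of_int_vec s) + 1"
      using cayley_adj_step_gauge p(3)[of i] Suc.prems s(1) by (metis Suc_le_lessD)
    moreover have "gauge d (of_int_vec s) + 1 \<le> ereal (real (Suc i))"
      using add_right_mono[OF s(2), of 1] by (simp add: one_ereal_def add.commute)
    ultimately show ?case by (blast intro: order_trans)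
  qed
  thus ?thesis using p(2) that by blast
qed

lemma cayley_adj_unit_step:
  assumes "e = axis j 1 \<or> (\<not> d \<and> e = - axis j 1)"
  shows "cayley_adj d ((+) b ` H) ((+) (b + e) ` H)"
  using assms
proof
  assume "e = axis j 1"
  hence "(+) (b + e) ` H = (\<lambda>v. v + axis j 1) ` ((+) b ` H)" by (simp add: translate_coset)
  thus ?thesis unfolding cayley_adj_def cayley_arc_def by auto
next
  assume "\<not> d \<and> e = - axis j 1"
  hence "(+) b ` H = (\<lambda>v. v + axis j 1) ` ((+) (b + e) ` H)" by (simp add: translate_coset)
  thus ?thesis using \<open>\<not> d \<and> e = - axis j 1\<close> unfolding cayley_adj_def cayley_arc_def by auto
qed

lemma walk_of_gauge:
  "gauge d (of_int_vec s) = ereal (real k) \<Longrightarrow> walk d k ((+) a ` H) ((+) (a + s) ` H)"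
proof (induction k arbitrary: s)
  case 0
  hence "s = 0" using gauge_of_int_vec_eq_0 by (simp add: zero_ereal_def)
  thus ?case unfolding walk_def by (intro exI[of _ "\<lambda>_. (+) a ` H"]) simp
next
  case (Suc k)
  obtain j where j: "d \<Longrightarrow> 0 < s $ j"
    "gauge d (of_int_vec (s - (if 0 < s $ j then axis j 1 else - axis j 1))) = ereal (real k)"
    using gauge_of_int_vec_Suc[OF Suc.prems] by blast
  define e :: "int^'m" where "e = (if 0 < s $ j then axis j 1 else - axis j 1)"
  obtain p where p: "p 0 = (+) a ` H" "p k = (+) (a + (s - e)) ` H"
    "\<And>i. i < k \<Longrightarrow> p i \<in> cosets_Zm H \<and> p (Suc i) \<in> cosets_Zm H \<and> cayley_adj d (p i) (p (Suc i))"
    using Suc.IH[OF j(2)[folded e_def]] unfolding walk_def by blast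
  have "cayley_adj d ((+) (a + (s - e)) ` H) ((+) (a + (s - e) + e) ` H)"
    using j(1) by (intro cayley_adj_unit_step[where j=j]) (auto simp: e_def)
  hence last: "cayley_adj d (p k) ((+) (a + s) ` H)" using p(2) by simp
  define q where "q i = (if i \<le> k then p i else (+) (a + s) ` H)" for i
  have "q i \<in> cosets_Zm H \<and> q (Suc i) \<in> cosets_Zm H \<and> cayley_adj d (q i) (q (Suc i))"
    if "i < Suc k" for i
  proof (cases "i < k")
    case False
    hence "i = k" using that by simp
    thus ?thesis using p(2) last by (simp add: q_def coset_in_cosets_Zm)
  qed (use p(3)[of i] in \<open>auto simp: q_def\<close>)
  moreover have "q 0 = (+) a ` H" "q (Suc k) = (+) (a + s) ` H" using p(1) by (auto simp: q_def)
  ultimately show ?case unfolding walk_def by blast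
qed

text \<open>Without a walk between the cosets, \<open>dist_G\<close> is the unspecified value \<open>LEAST n. False\<close>;
  the finiteness hypothesis excludes this.\<close>
lemma dist_G_coset_eq_Inf_gauge:
  assumes "u0 \<in> H" "gauge d (of_int_vec (b - a + u0)) \<noteq> \<infinity>"
  shows "ereal (real (dist_G d H ((+) a ` H) ((+) b ` H))) = (INF u\<in>H. gauge d (of_int_vec (b - a + u)))"
proof -
  let ?X = "(+) a ` H" and ?Y = "(+) b ` H"
  have walk_lift: "walk d k ?X ?Y" if "u \<in> H" "gauge d (of_int_vec (b - a + u)) = ereal (real k)" for u k
  proof -
    have "walk d k ?X ((+) (a + (b - a + u)) ` H)" by (rule walk_of_gauge[OF that(2)])
    moreover have "(+) (a + (b - a + u)) ` H = ?Y" using coset_eq_iff[OF subgroup] that(1) by simp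
    ultimately show ?thesis by simp
  qed
  obtain k0 where "gauge d (of_int_vec (b - a + u0)) = ereal (real k0)"
    using assms(2) by (rule gauge_of_int_vec_nat)
  hence "walk d k0 ?X ?Y" using walk_lift assms(1) by blast
  define n0 where "n0 = (LEAST n. walk d n ?X ?Y)"
  have "walk d n0 ?X ?Y" unfolding n0_def by (rule LeastI) fact
  then obtain s where s: "?Y = (+) (a + s) ` H" "gauge d (of_int_vec s) \<le> ereal (real n0)"
    by (rule walk_gauge_le)
  have "b - (a + s) \<in> H" using s(1) coset_eq_iff[OF subgroup] by simp
  hence "a + s - b \<in> H" using additive_subgroupD(3)[OF subgroup] by (metis minus_diff_eq)
  hence "(INF u\<in>H. gauge d (of_int_vec (b - a + u))) \<le> gauge d (of_int_vec s)"
    using INF_lower[of "a + s - b" H "\<lambda>u. gauge d (of_int_vec (b - a + u))"] by simp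
  moreover have "ereal (real n0) \<le> gauge d (of_int_vec (b - a + u))" if u: "u \<in> H" for u
  proof (cases "gauge d (of_int_vec (b - a + u)) = \<infinity>")
    case False
    then obtain k where k: "gauge d (of_int_vec (b - a + u)) = ereal (real k)"
      by (rule gauge_of_int_vec_nat)
    have "n0 \<le> k" unfolding n0_def using walk_lift[OF u k] by (rule Least_le)
    thus ?thesis using k by simp
  qed simp
  ultimately show ?thesis
    unfolding dist_G_eq_Least_walk n0_def[symmetric] using s(2)
    by (intro antisym INF_greatest) auto
qed

lemma quot_gauge_grid:
  "quot_gauge d (lattice_bar H) (scale H *\<^sub>R of_int_vec w)
     = ereal (scale H) * (INF u\<in>H. gauge d (of_int_vec (w + u)))"
proof -
  have "quot_gauge d (lattice_bar H) (scale H *\<^sub>R of_int_vec w)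
      = (INF u\<in>H. ereal (scale H) * gauge d (of_int_vec (w + u)))"
    unfolding quot_gauge_def lattice_bar_eq image_image
    by (simp add: gauge_scaleR[OF scale_pos] scaleR_add_right[symmetric])
  also have "\<dots> = ereal (scale H) * (INF u\<in>H. gauge d (of_int_vec (w + u)))"
  proof -
    have "(INF u\<in>H. ereal (scale H) * gauge d (of_int_vec (w + u)))
        = Inf {ereal (scale H) * x | x. x \<in> (\<lambda>u. gauge d (of_int_vec (w + u))) ` H}"
      by (rule arg_cong[where f = Inf]) auto
    thus ?thesis using ereal_Inf_cmult[OF scale_pos] by simp
  qed
  finally show ?thesis .
qed

end

section \<open>The normalized mean distance as a Riemann sum\<close>

definition average :: "'a set \<Rightarrow> ('a \<Rightarrow> real) \<Rightarrow> real" where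
  "average C f = (1 / real (card C)) * (\<Sum>x\<in>C. f x)"

context finite_index_Zm
begin

definition coset_gauge :: "bool \<Rightarrow> (int^'m) set \<Rightarrow> real" where
  "coset_gauge d Y = real_of_ereal (quot_gauge d (lattice_bar H) (scale H *\<^sub>R of_int_vec (rep Y)))"

lemma dist_G_eq_quot_gauge:
  assumes bounded: "\<forall>x. quot_gauge d (lattice_bar H) x \<le> ereal B"
    and XY: "X \<in> cosets_Zm H" "Y \<in> cosets_Zm H"
  shows "real (dist_G d H X Y)
       = real_of_ereal (quot_gauge d (lattice_bar H) (scale H *\<^sub>R of_int_vec (rep Y - rep X))) / scale H"
proof -
  let ?w = "rep Y - rep X"
  have grid: "quot_gauge d (lattice_bar H) (scale H *\<^sub>R of_int_vec ?w)
      = ereal (scale H) * (INF u\<in>H. gauge d (of_int_vec (?w + u)))"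
    by (rule quot_gauge_grid)
  have "quot_gauge d (lattice_bar H) (scale H *\<^sub>R of_int_vec ?w) < \<infinity>"
    using bounded[rule_format, of "scale H *\<^sub>R of_int_vec ?w"] by (auto simp: less_top[symmetric])
  hence "(INF u\<in>H. gauge d (of_int_vec (?w + u))) < \<infinity>"
    using grid scale_pos by (cases "(INF u\<in>H. gauge d (of_int_vec (?w + u)))") auto
  hence "\<exists>u\<in>H. gauge d (of_int_vec (?w + u)) < \<infinity>" by (simp only: INF_less_iff)
  then obtain u0 where u0: "u0 \<in> H" "gauge d (of_int_vec (?w + u0)) < \<infinity>" by blast
  have "ereal (real (dist_G d H ((+) (rep X) ` H) ((+) (rep Y) ` H)))
      = (INF u\<in>H. gauge d (of_int_vec (?w + u)))"
    by (rule dist_G_coset_eq_Inf_gauge[OF u0(1)]) (use u0(2) in auto)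
  moreover have "dist_G d H X Y = dist_G d H ((+) (rep X) ` H) ((+) (rep Y) ` H)"
    using coset_rep XY by metis
  ultimately have "quot_gauge d (lattice_bar H) (scale H *\<^sub>R of_int_vec ?w)
      = ereal (scale H * real (dist_G d H X Y))"
    using grid by (metis times_ereal.simps(1))
  thus ?thesis using scale_pos by simp
qed

text \<open>Translation by \<open>-X\<close> permutes the cosets, so the inner sum does not depend on \<open>X\<close>.\<close>
lemma sum_quot_gauge_shift:
  assumes X: "X \<in> cosets_Zm H"
  shows "(\<Sum>Y\<in>cosets_Zm H. G (quot_gauge d (lattice_bar H) (scale H *\<^sub>R of_int_vec (rep Y - rep X))))
       = (\<Sum>Y\<in>cosets_Zm H. G (quot_gauge d (lattice_bar H) (scale H *\<^sub>R of_int_vec (rep Y))))"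
proof -
  let ?q = "\<lambda>z. G (quot_gauge d (lattice_bar H) (scale H *\<^sub>R of_int_vec z))"
  define T where "T Y = (\<lambda>v. v + (- rep X)) ` Y" for Y :: "(int^'m) set"
  define T' where "T' Y = (\<lambda>v. v + rep X) ` Y" for Y :: "(int^'m) set"
  have TY: "T Y = (+) (rep Y + - rep X) ` H" "T' Y = (+) (rep Y + rep X) ` H"
    if "Y \<in> cosets_Zm H" for Y
    unfolding T_def T'_def using coset_rep[OF that] translate_coset by metis+
  have bij: "bij_betw T (cosets_Zm H) (cosets_Zm H)"
  proof (rule bij_betw_byWitness[of _ T'])
    show "\<forall>Y\<in>cosets_Zm H. T' (T Y) = Y" "\<forall>Y\<in>cosets_Zm H. T (T' Y) = Y"
      unfolding T_def T'_def by (auto simp: image_iff)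
    show "T ` cosets_Zm H \<subseteq> cosets_Zm H" "T' ` cosets_Zm H \<subseteq> cosets_Zm H"
      using TY coset_in_cosets_Zm by auto
  qed
  have "?q (rep (T Y)) = ?q (rep Y - rep X)" if Y: "Y \<in> cosets_Zm H" for Y
  proof -
    have TYc: "T Y \<in> cosets_Zm H" using TY[OF Y] coset_in_cosets_Zm by simp
    have "rep Y - rep X \<in> T Y" using TY[OF Y] coset_self[OF subgroup] by simp
    hence "rep (T Y) - (rep Y - rep X) \<in> H"
      using diff_rep_mem[OF _ TYc] additive_subgroupD(3)[OF subgroup] by (metis minus_diff_eq)
    hence "scale H *\<^sub>R of_int_vec (rep (T Y) - (rep Y - rep X)) \<in> lattice_bar H"
      using scaled_mem_lattice_bar_iff by blast
    moreover have "scale H *\<^sub>R of_int_vec (rep (T Y)) = scale H *\<^sub>R of_int_vec (rep Y - rep X)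
        + scale H *\<^sub>R of_int_vec (rep (T Y) - (rep Y - rep X))"
      by (simp add: scaleR_diff_right)
    ultimately show ?thesis
      using quot_gauge_translate[OF additive_subgroup_lattice_bar] by metis
  qed
  hence "(\<Sum>Y\<in>cosets_Zm H. ?q (rep Y - rep X)) = (\<Sum>Y\<in>cosets_Zm H. ?q (rep (T Y)))" by simp
  also have "\<dots> = (\<Sum>Y\<in>cosets_Zm H. ?q (rep Y))"
    by (rule sum.reindex_bij_betw[OF bij])
  finally show ?thesis .
qed

lemma scale_mult_xi_G:
  assumes bounded: "\<forall>x. quot_gauge d (lattice_bar H) x \<le> ereal B" and "\<alpha> > 0"
  shows "scale H * xi_G d \<alpha> H = average (cosets_Zm H) (\<lambda>Y. coset_gauge d Y powr \<alpha>) powr (1 / \<alpha>)"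
proof -
  let ?N = "real (index_Zm H)" and ?C = "cosets_Zm H" and ?h = "scale H"
  define S where "S = (\<Sum>Y\<in>?C. coset_gauge d Y powr \<alpha>)"
  have N: "?N = real (card ?C)" and N_pos: "?N > 0" using index_pos unfolding index_Zm_def by auto
  have inner: "(\<Sum>Y\<in>?C. real (dist_G d H X Y) powr \<alpha>) = S / ?h powr \<alpha>" if X: "X \<in> ?C" for X
  proof -
    have "(\<Sum>Y\<in>?C. real (dist_G d H X Y) powr \<alpha>)
        = (\<Sum>Y\<in>?C. (\<lambda>t. (real_of_ereal t / ?h) powr \<alpha>)
            (quot_gauge d (lattice_bar H) (?h *\<^sub>R of_int_vec (rep Y - rep X))))"
      using dist_G_eq_quot_gauge[OF bounded X] by simp
    also have "\<dots> = (\<Sum>Y\<in>?C. (\<lambda>t. (real_of_ereal t / ?h) powr \<alpha>)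
            (quot_gauge d (lattice_bar H) (?h *\<^sub>R of_int_vec (rep Y))))"
      by (rule sum_quot_gauge_shift[OF X])
    also have "\<dots> = S / ?h powr \<alpha>"
      unfolding S_def coset_gauge_def using scale_pos quot_gauge_nonneg
      by (simp add: powr_divide real_of_ereal_pos sum_divide_distrib)
    finally show ?thesis .
  qed
  have "xi_G d \<alpha> H = ((1 / ?N\<^sup>2) * (\<Sum>X\<in>?C. S / ?h powr \<alpha>)) powr (1 / \<alpha>)"
    unfolding xi_G_def N using inner by simp
  also have "\<dots> = ((1 / ?N) * S / ?h powr \<alpha>) powr (1 / \<alpha>)"
    using N_pos by (simp add: N power2_eq_square)
  also have "\<dots> = ((1 / ?N) * S) powr (1 / \<alpha>) / (?h powr \<alpha>) powr (1 / \<alpha>)"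
    by (rule powr_divide)
  also have "(?h powr \<alpha>) powr (1 / \<alpha>) = ?h" using \<open>\<alpha> > 0\<close> scale_pos by (simp add: powr_powr)
  finally show ?thesis unfolding S_def average_def index_Zm_def[symmetric] using scale_pos by simp
qed

end

lemma quot_gauge_tile_above:
  fixes x :: "real^'m"
  assumes "x \<in> tile True h" "L \<noteq> {}"
  shows "quot_gauge d L (p + x) \<le> quot_gauge d L p + ereal (real CARD('m) * h)"
  using quot_gauge_triangle[OF assms(2), of d "p + x" p] gauge_tile_le[OF assms(1), of d]
  by (simp add: order_trans add_left_mono)

lemma quot_gauge_tile_below:
  fixes x :: "real^'m"
  assumes "x \<in> tile False h" "L \<noteq> {}"
  shows "quot_gauge d L p \<le> quot_gauge d L (p + x) + ereal (real CARD('m) * h)"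
  using quot_gauge_triangle[OF assms(2), of d p "p + x"] gauge_tile_le[OF assms(1), of d]
  by (simp add: order_trans add_left_mono)

lemma nn_integral_indicator_le_const:
  assumes "A \<in> sets M" "\<And>x. x \<in> A \<Longrightarrow> f x \<le> a"
  shows "(\<integral>\<^sup>+x. ennreal (f x) * indicator A x \<partial>M) \<le> ennreal a * emeasure M A"
proof -
  have "(\<integral>\<^sup>+x. ennreal (f x) * indicator A x \<partial>M) \<le> (\<integral>\<^sup>+x. ennreal a * indicator A x \<partial>M)"
    using assms(2) by (intro nn_integral_mono) (auto simp: indicator_def ennreal_leI)
  thus ?thesis using nn_integral_cmult_indicator[OF assms(1)] by simp
qed

lemma const_le_nn_integral_indicator:
  assumes "A \<in> sets M" "\<And>x. x \<in> A \<Longrightarrow> a \<le> f x"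
  shows "ennreal a * emeasure M A \<le> (\<integral>\<^sup>+x. ennreal (f x) * indicator A x \<partial>M)"
proof -
  have "(\<integral>\<^sup>+x. ennreal a * indicator A x \<partial>M) \<le> (\<integral>\<^sup>+x. ennreal (f x) * indicator A x \<partial>M)"
    using assms(2) by (intro nn_integral_mono) (auto simp: indicator_def ennreal_leI)
  thus ?thesis using nn_integral_cmult_indicator[OF assms(1)] by simp
qed

definition mean_quot_gauge_powr :: "bool \<Rightarrow> real \<Rightarrow> (real^'m) set \<Rightarrow> real" where
  "mean_quot_gauge_powr d \<alpha> L = (let F = SOME F. fundamental_domain L F in
      (1 / measure lebesgue F) * (LINT x:F|lebesgue. real_of_ereal (quot_gauge d L x) powr \<alpha>))"

lemma zeta_L_eq_mean_quot_gauge_powr: "zeta_L d \<alpha> L = mean_quot_gauge_powr d \<alpha> L powr (1 / \<alpha>)"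
  unfolding zeta_L_def mean_quot_gauge_powr_def dist_quot_0_eq_quot_gauge by (simp add: Let_def)

context finite_index_Zm
begin

lemma nn_integral_fundamental_domain_tiles:
  fixes g :: "real^'m \<Rightarrow> ennreal"
  assumes "fundamental_domain (lattice_bar H) F" and g: "g \<in> borel_measurable lebesgue"
    and "\<And>x v. v \<in> lattice_bar H \<Longrightarrow> g (x + v) = g x"
  shows "(\<integral>\<^sup>+x. g x * indicator F x \<partial>lebesgue)
       = (\<Sum>Y\<in>cosets_Zm H. \<integral>\<^sup>+x. g (scale H *\<^sub>R of_int_vec (rep Y) + x) * indicator (tile s (scale H)) x \<partial>lebesgue)"
  using nn_integral_fundamental_domain_eq[OF countable_lattice_bar infinite_lattice_bar
      additive_subgroup_lattice_bar assms(1) fundamental_domain_tiled_domain g assms(3)]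
    nn_integral_tiled_domain[OF g]
  by simp

lemma emeasure_tile_scale: "emeasure lebesgue (tile s (scale H) :: (real^'m) set)
    = ennreal (measure lebesgue (tile s (scale H) :: (real^'m) set))"
  and measure_tile_scale_pos: "measure lebesgue (tile s (scale H) :: (real^'m) set) > 0"
  using emeasure_tile[OF scale_pos, of s] emeasure_eq_ennreal_measure[of lebesgue "tile s (scale H)"]
  by (auto simp: measure_def enn2real_positive_iff less_top)

lemma emeasure_fundamental_domain:
  assumes "fundamental_domain (lattice_bar H) F"
  shows "emeasure lebesgue F
       = ennreal (real (index_Zm H) * measure lebesgue (tile s (scale H) :: (real^'m) set))"
proof -
  have [measurable]: "F \<in> sets lebesgue" using assms unfolding fundamental_domain_def by auto
  have "emeasure lebesgue F = (\<integral>\<^sup>+x. 1 * indicator F x \<partial>lebesgue)" by simp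
  also have "\<dots> = (\<Sum>Y\<in>cosets_Zm H. emeasure lebesgue (tile s (scale H) :: (real^'m) set))"
    using nn_integral_fundamental_domain_tiles[OF assms, of "\<lambda>_. 1" s] by simp
  also have "\<dots> = ennreal (real (index_Zm H) * measure lebesgue (tile s (scale H) :: (real^'m) set))"
    using measure_tile_scale_pos[of s]
    by (simp add: emeasure_tile_scale index_Zm_def ennreal_of_nat_eq_real_of_nat ennreal_mult)
  finally show ?thesis .
qed

lemma measure_fundamental_domain:
  "fundamental_domain (lattice_bar H) F
    \<Longrightarrow> measure lebesgue F = real (index_Zm H) * measure lebesgue (tile s (scale H) :: (real^'m) set)"
  using emeasure_fundamental_domain[of F s] measure_tile_scale_pos[of s] index_pos
  by (simp add: measure_def)

lemma quot_gauge_bounded_real: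
  assumes "\<forall>x. quot_gauge d (lattice_bar H) x \<le> ereal B"
  shows "quot_gauge d (lattice_bar H) x = ereal (real_of_ereal (quot_gauge d (lattice_bar H) x))"
    "0 \<le> real_of_ereal (quot_gauge d (lattice_bar H) x)"
    "real_of_ereal (quot_gauge d (lattice_bar H) x) \<le> B"
proof -
  have "0 \<le> quot_gauge d (lattice_bar H) x" "quot_gauge d (lattice_bar H) x \<le> ereal B"
    using assms quot_gauge_nonneg by auto
  thus "quot_gauge d (lattice_bar H) x = ereal (real_of_ereal (quot_gauge d (lattice_bar H) x))"
    "0 \<le> real_of_ereal (quot_gauge d (lattice_bar H) x)"
    "real_of_ereal (quot_gauge d (lattice_bar H) x) \<le> B"
    by (cases "quot_gauge d (lattice_bar H) x"; simp)+
qed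

lemma nn_integral_tile_quot_gauge_powr:
  fixes Y :: "(int^'m) set"
  assumes bounded: "\<forall>x. quot_gauge d (lattice_bar H) x \<le> ereal B" and "\<alpha> > 0"
  defines "g \<equiv> \<lambda>x. real_of_ereal (quot_gauge d (lattice_bar H) x) powr \<alpha>"
    and "c \<equiv> real CARD('m) * scale H" and "p \<equiv> scale H *\<^sub>R of_int_vec (rep Y)"
  shows "(\<integral>\<^sup>+x. ennreal (g (p + x)) * indicator (tile True (scale H)) x \<partial>lebesgue)
       \<le> ennreal ((coset_gauge d Y + c) powr \<alpha> * measure lebesgue (tile True (scale H) :: (real^'m) set))"
    and "ennreal (max 0 (coset_gauge d Y - c) powr \<alpha> * measure lebesgue (tile False (scale H) :: (real^'m) set))
       \<le> (\<integral>\<^sup>+x. ennreal (g (p + x)) * indicator (tile False (scale H)) x \<partial>lebesgue)"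
proof -
  note real = quot_gauge_bounded_real[OF bounded]
  have L: "lattice_bar H \<noteq> {}" using infinite_lattice_bar by auto
  have above: "g (p + x) \<le> (coset_gauge d Y + c) powr \<alpha>" if "x \<in> tile True (scale H)" for x
  proof -
    have "real_of_ereal (quot_gauge d (lattice_bar H) (p + x)) \<le> coset_gauge d Y + c"
      using quot_gauge_tile_above[OF that L, of d p] real(1)[of "p + x"] real(1)[of p]
      unfolding coset_gauge_def c_def p_def by (metis plus_ereal.simps(1) ereal_less_eq(3))
    thus ?thesis unfolding g_def using \<open>\<alpha> > 0\<close> real(2) by (intro powr_mono2) auto
  qed
  show "(\<integral>\<^sup>+x. ennreal (g (p + x)) * indicator (tile True (scale H)) x \<partial>lebesgue)
       \<le> ennreal ((coset_gauge d Y + c) powr \<alpha> * measure lebesgue (tile True (scale H) :: (real^'m) set))"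
    using nn_integral_indicator_le_const[of "tile True (scale H)" lebesgue "\<lambda>x. g (p + x)", OF _ above]
      measure_tile_scale_pos[of True]
    by (simp add: emeasure_tile_scale ennreal_mult del: nn_integral_indicator)
  have below: "max 0 (coset_gauge d Y - c) powr \<alpha> \<le> g (p + x)" if "x \<in> tile False (scale H)" for x
  proof -
    have "coset_gauge d Y \<le> real_of_ereal (quot_gauge d (lattice_bar H) (p + x)) + c"
      using quot_gauge_tile_below[OF that L, of d p] real(1)[of "p + x"] real(1)[of p]
      unfolding coset_gauge_def c_def p_def by (metis plus_ereal.simps(1) ereal_less_eq(3))
    hence "max 0 (coset_gauge d Y - c) \<le> real_of_ereal (quot_gauge d (lattice_bar H) (p + x))"
      using real(2) by auto
    thus ?thesis unfolding g_def using \<open>\<alpha> > 0\<close> by (intro powr_mono2) auto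
  qed
  show "ennreal (max 0 (coset_gauge d Y - c) powr \<alpha> * measure lebesgue (tile False (scale H) :: (real^'m) set))
       \<le> (\<integral>\<^sup>+x. ennreal (g (p + x)) * indicator (tile False (scale H)) x \<partial>lebesgue)"
    using const_le_nn_integral_indicator[of "tile False (scale H)" lebesgue _ "\<lambda>x. g (p + x)", OF _ below]
      measure_tile_scale_pos[of False]
    by (simp add: emeasure_tile_scale ennreal_mult del: nn_integral_indicator)
qed

end

context finite_index_Zm
begin

lemma set_integral_quot_gauge_powr_tiles:
  assumes bounded: "\<forall>x. quot_gauge d (lattice_bar H) x \<le> ereal B" and "\<alpha> > 0"
    and F: "fundamental_domain (lattice_bar H) F"
  defines "g \<equiv> \<lambda>x. real_of_ereal (quot_gauge d (lattice_bar H) x) powr \<alpha>"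
  shows "ennreal (LINT x:F|lebesgue. g x) = (\<Sum>Y\<in>cosets_Zm H.
    \<integral>\<^sup>+x. ennreal (g (scale H *\<^sub>R of_int_vec (rep Y) + x)) * indicator (tile s (scale H)) x \<partial>lebesgue)"
proof -
  have [measurable]: "F \<in> sets lebesgue" using F unfolding fundamental_domain_def by auto
  have [measurable]: "g \<in> borel_measurable lebesgue"
    unfolding g_def using countable_lattice_bar by measurable
  have g_nonneg: "0 \<le> g x" for x unfolding g_def by simp
  have "g x \<le> B powr \<alpha>" for x
    unfolding g_def using quot_gauge_bounded_real[OF bounded] \<open>\<alpha> > 0\<close> by (intro powr_mono2) auto
  hence "integrable lebesgue (\<lambda>x. indicator F x *\<^sub>R g x)"
    using emeasure_fundamental_domain[OF F, of True] g_nonneg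
    by (intro integrableI_bounded_set_indicator[where B = "B powr \<alpha>"]) auto
  hence "(\<integral>\<^sup>+x. ennreal (indicator F x *\<^sub>R g x) \<partial>lebesgue) = ennreal (LINT x:F|lebesgue. g x)"
    unfolding set_lebesgue_integral_def by (rule nn_integral_eq_integral) (simp add: g_nonneg)
  moreover have "ennreal (indicator F x *\<^sub>R g x) = ennreal (g x) * indicator F x" for x
    by (simp add: indicator_def)
  ultimately have "ennreal (LINT x:F|lebesgue. g x) = (\<integral>\<^sup>+x. ennreal (g x) * indicator F x \<partial>lebesgue)"
    by simp
  also have "\<dots> = (\<Sum>Y\<in>cosets_Zm H.
    \<integral>\<^sup>+x. ennreal (g (scale H *\<^sub>R of_int_vec (rep Y) + x)) * indicator (tile s (scale H)) x \<partial>lebesgue)"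
    by (rule nn_integral_fundamental_domain_tiles[OF F])
      (measurable, simp add: g_def quot_gauge_translate[OF additive_subgroup_lattice_bar])
  finally show ?thesis .
qed

lemma mean_quot_gauge_powr_bounds:
  assumes bounded: "\<forall>x. quot_gauge d (lattice_bar H) x \<le> ereal B" and "\<alpha> > 0"
  defines "c \<equiv> real CARD('m) * scale H"
  shows "mean_quot_gauge_powr d \<alpha> (lattice_bar H) \<le> average (cosets_Zm H) (\<lambda>Y. (coset_gauge d Y + c) powr \<alpha>)"
    and "average (cosets_Zm H) (\<lambda>Y. max 0 (coset_gauge d Y - c) powr \<alpha>) \<le> mean_quot_gauge_powr d \<alpha> (lattice_bar H)"
proof -
  let ?L = "lattice_bar H" and ?C = "cosets_Zm H" and ?N = "real (index_Zm H)"
  define \<mu> where "\<mu> s = measure lebesgue (tile s (scale H) :: (real^'m) set)" for s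
  define F where "F = (SOME F. fundamental_domain ?L F)"
  have F: "fundamental_domain ?L F"
    unfolding F_def using fundamental_domain_tiled_domain by (rule someI)
  define J where "J = (LINT x:F|lebesgue. real_of_ereal (quot_gauge d ?L x) powr \<alpha>)"
  have J_tiles: "ennreal J = (\<Sum>Y\<in>?C. \<integral>\<^sup>+x. ennreal (real_of_ereal (quot_gauge d ?L
      (scale H *\<^sub>R of_int_vec (rep Y) + x)) powr \<alpha>) * indicator (tile s (scale H)) x \<partial>lebesgue)" for s
    unfolding J_def by (rule set_integral_quot_gauge_powr_tiles[OF bounded \<open>\<alpha> > 0\<close> F])
  have mean: "mean_quot_gauge_powr d \<alpha> ?L = J / (?N * \<mu> s)" for s
    unfolding mean_quot_gauge_powr_def F_def[symmetric] J_def Let_def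
    using measure_fundamental_domain[OF F] by (simp add: \<mu>_def)
  have "ennreal J \<le> (\<Sum>Y\<in>?C. ennreal ((coset_gauge d Y + c) powr \<alpha> * \<mu> True))"
    unfolding J_tiles[of True] \<mu>_def c_def by (intro sum_mono nn_integral_tile_quot_gauge_powr(1)[OF bounded \<open>\<alpha> > 0\<close>])
  also have "\<dots> = ennreal ((\<Sum>Y\<in>?C. (coset_gauge d Y + c) powr \<alpha>) * \<mu> True)"
    using measure_tile_scale_pos[of True] by (simp add: \<mu>_def sum_ennreal sum_distrib_right)
  finally have "J \<le> (\<Sum>Y\<in>?C. (coset_gauge d Y + c) powr \<alpha>) * \<mu> True"
    using measure_tile_scale_pos[of True] by (simp add: \<mu>_def sum_nonneg)
  thus "mean_quot_gauge_powr d \<alpha> ?L \<le> average ?C (\<lambda>Y. (coset_gauge d Y + c) powr \<alpha>)"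
    unfolding mean[of True] average_def index_Zm_def[symmetric] using measure_tile_scale_pos[of True] index_pos
    by (simp add: \<mu>_def field_simps)
  have "ennreal ((\<Sum>Y\<in>?C. max 0 (coset_gauge d Y - c) powr \<alpha>) * \<mu> False)
      = (\<Sum>Y\<in>?C. ennreal (max 0 (coset_gauge d Y - c) powr \<alpha> * \<mu> False))"
    using measure_tile_scale_pos[of False] by (simp add: \<mu>_def sum_ennreal sum_distrib_right)
  also have "\<dots> \<le> ennreal J"
    unfolding J_tiles[of False] \<mu>_def c_def by (intro sum_mono nn_integral_tile_quot_gauge_powr(2)[OF bounded \<open>\<alpha> > 0\<close>])
  finally have "(\<Sum>Y\<in>?C. max 0 (coset_gauge d Y - c) powr \<alpha>) * \<mu> False \<le> J"
    unfolding J_def by (simp add: set_lebesgue_integral_def integral_nonneg)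
  thus "average ?C (\<lambda>Y. max 0 (coset_gauge d Y - c) powr \<alpha>) \<le> mean_quot_gauge_powr d \<alpha> ?L"
    unfolding mean[of False] average_def index_Zm_def[symmetric] using measure_tile_scale_pos[of False] index_pos
    by (simp add: \<mu>_def field_simps)
qed

end

section \<open>Compact subsets of the space of lattices\<close>

definition covering_radius_le :: "(real^'m) set \<Rightarrow> real \<Rightarrow> bool" where
  "covering_radius_le L r \<longleftrightarrow> (\<forall>x. \<exists>v\<in>L. norm (x + v) \<le> r)"

lemma covering_radius_le_nonneg: "covering_radius_le L r \<Longrightarrow> 0 \<le> r"
  unfolding covering_radius_le_def using norm_ge_zero order_trans by blast

lemma covering_radius_le_mono: "covering_radius_le L r \<Longrightarrow> r \<le> r' \<Longrightarrow> covering_radius_le L r'"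
  unfolding covering_radius_le_def by (meson order_trans)

text \<open>A point with all coordinates in \<open>[0, 4R + 1]\<close> is reached from \<open>x\<close> by two lattice vectors:
  one bringing \<open>x\<close> within \<open>R\<close> of the origin, one moving it by roughly \<open>2R + 1\<close> in each coordinate.
  This bound holds for both gauges.\<close>
lemma quot_gauge_le_of_covering:
  fixes L :: "(real^'m) set"
  assumes "additive_subgroup L" "covering_radius_le L R"
  shows "quot_gauge d L x \<le> ereal (real CARD('m) * (4 * R + 1))"
proof -
  have R: "0 \<le> R" using covering_radius_le_nonneg[OF assms(2)] .
  obtain v0 where v0: "v0 \<in> L" "norm (- vec (2 * R + 1) + v0) \<le> R"
    using assms(2) unfolding covering_radius_le_def by blast
  have v0i: "R + 1 \<le> v0 $ i \<and> v0 $ i \<le> 3 * R + 1" for i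
    using component_le_norm_cart[of "- vec (2 * R + 1) + v0" i] v0(2) by (simp add: abs_le_iff)
  obtain v where v: "v \<in> L" "norm (x + v) \<le> R"
    using assms(2) unfolding covering_radius_le_def by blast
  have vi: "- R \<le> (x + v) $ i \<and> (x + v) $ i \<le> R" for i
    using component_le_norm_cart[of "x + v" i] v(2) by (simp add: abs_le_iff)
  define w where "w = x + (v + v0)"
  have wi: "0 \<le> w $ i \<and> w $ i \<le> 4 * R + 1" for i
    using vi[of i] v0i[of i] R unfolding w_def by simp
  have "quot_gauge d L x \<le> gauge d w"
    unfolding w_def using additive_subgroupD(2)[OF assms(1) v(1) v0(1)] by (rule quot_gauge_le)
  also have "\<dots> = ereal (\<Sum>i\<in>UNIV. w $ i)" using wi by (intro gauge_of_nonneg) auto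
  also have "(\<Sum>i\<in>UNIV. w $ i) \<le> (\<Sum>i\<in>(UNIV::'m set). 4 * R + 1)" by (rule sum_mono) (use wi in auto)
  finally show ?thesis by simp
qed

lemma lattice_of_eq: "lattice_of A = {A *v of_int_vec z | z. True}"
  unfolding lattice_of_def of_int_vec_def ..

lemma covering_radius_le_lattice_of:
  fixes A :: "real^'m^'m"
  assumes "invertible A"
  shows "covering_radius_le (lattice_of A) (\<Sum>i\<in>UNIV. norm (column i A))"
  unfolding covering_radius_le_def
proof
  fix x :: "real^'m"
  obtain Ainv where Ainv: "A ** Ainv = mat 1" using assms unfolding invertible_def by blast
  define y where "y = Ainv *v x"
  define z :: "int^'m" where "z = (\<chi> i. - \<lfloor>y $ i\<rfloor>)"
  define t where "t = y + of_int_vec z"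
  have t: "0 \<le> t $ i \<and> t $ i \<le> 1" for i unfolding t_def z_def by simp linarith
  have "x + A *v of_int_vec z = A *v t"
    unfolding t_def y_def using Ainv by (simp add: matrix_vector_right_distrib matrix_vector_mul_assoc)
  also have "\<dots> = (\<Sum>i\<in>UNIV. t $ i *\<^sub>R column i A)"
    by (simp add: matrix_mult_sum scalar_mult_eq_scaleR)
  finally have "norm (x + A *v of_int_vec z) \<le> (\<Sum>i\<in>UNIV. norm (t $ i *\<^sub>R column i A))"
    using norm_sum by metis
  also have "\<dots> \<le> (\<Sum>i\<in>UNIV. norm (column i A))"
    using t by (intro sum_mono) (simp add: mult_left_le_one_le)
  finally show "\<exists>v\<in>lattice_of A. norm (x + v) \<le> (\<Sum>i\<in>UNIV. norm (column i A))"
    unfolding lattice_of_eq by blast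
qed

lemma norm_matrix_vector_le:
  fixes M :: "real^'m^'m"
  shows "norm (M *v w) \<le> (\<Sum>i\<in>UNIV. \<Sum>j\<in>UNIV. \<bar>M $ i $ j\<bar>) * norm w"
  using onorm[OF matrix_vector_mul_bounded_linear, of M w]
    mult_right_mono[OF onorm_le_matrix_component_sum[of M] norm_ge_zero[of w]]
  by linarith

lemma sum_abs_entries_le_norm:
  fixes M :: "real^'m^'m"
  shows "(\<Sum>i\<in>UNIV. \<Sum>j\<in>UNIV. \<bar>M $ i $ j\<bar>) \<le> real CARD('m) * real CARD('m) * norm M"
proof -
  have "\<bar>M $ i $ j\<bar> \<le> norm M" for i j
    using component_le_norm_cart[of "M $ i" j] Finite_Cartesian_Product.norm_nth_le[of M i] by linarith
  hence "(\<Sum>i\<in>UNIV. \<Sum>j\<in>UNIV. \<bar>M $ i $ j\<bar>) \<le> (\<Sum>i\<in>(UNIV::'m set). \<Sum>j\<in>(UNIV::'m set). norm M)"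
    by (intro sum_mono) auto
  thus ?thesis by simp
qed

text \<open>Write \<open>A\<close> as \<open>(A A\<^sub>0\<^sup>-\<^sup>1) A\<^sub>0\<close>: the first factor moves every vector by at most
  \<open>t = k \<parallel>A - A\<^sub>0\<parallel>\<close> times its length, so covering radii grow by at most the factor \<open>1 + t\<close>.\<close>
lemma covering_radius_le_perturb:
  fixes A0 :: "real^'m^'m"
  assumes cover: "covering_radius_le (lattice_of A0) r" and "invertible A0"
  shows "\<exists>k\<ge>0. \<forall>A. invertible A \<longrightarrow> covering_radius_le (lattice_of A) (r * (1 + k * norm (A - A0)))"
proof -
  obtain Ai where Ai: "A0 ** Ai = mat 1" "Ai ** A0 = mat 1" using assms(2) unfolding invertible_def by blast
  define k where "k = real CARD('m) * real CARD('m) * (\<Sum>i\<in>UNIV. \<Sum>j\<in>UNIV. \<bar>Ai $ i $ j\<bar>)"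
  have k: "0 \<le> k" unfolding k_def by (simp add: sum_nonneg)
  have stretch: "norm (A *v (Ai *v w)) \<le> (1 + k * norm (A - A0)) * norm w" for A w
  proof -
    have "(A - A0) *v (Ai *v w) = A *v (Ai *v w) - A0 *v (Ai *v w)"
      by (rule matrix_vector_mult_diff_rdistrib)
    moreover have "A0 *v (Ai *v w) = w" using Ai by (simp add: matrix_vector_mul_assoc)
    ultimately have "A *v (Ai *v w) = w + (A - A0) *v (Ai *v w)" by simp
    hence "norm (A *v (Ai *v w)) \<le> norm w + norm ((A - A0) *v (Ai *v w))" by (metis norm_triangle_ineq)
    also have "norm ((A - A0) *v (Ai *v w)) \<le> (real CARD('m) * real CARD('m) * norm (A - A0))
        * ((\<Sum>i\<in>UNIV. \<Sum>j\<in>UNIV. \<bar>Ai $ i $ j\<bar>) * norm w)"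
      using norm_matrix_vector_le[of "A - A0" "Ai *v w"]
      by (rule order_trans) (intro mult_mono sum_abs_entries_le_norm norm_matrix_vector_le; simp add: sum_nonneg)
    finally show ?thesis unfolding k_def by (simp add: algebra_simps)
  qed
  have "\<exists>v\<in>lattice_of A. norm (x + v) \<le> r * (1 + k * norm (A - A0))" if A: "invertible A" for A x
  proof -
    obtain Ainv where Ainv: "A ** Ainv = mat 1" using A unfolding invertible_def by blast
    obtain z where z: "norm (A0 *v (Ainv *v x) + A0 *v of_int_vec z) \<le> r"
      using cover unfolding covering_radius_le_def lattice_of_eq by blast
    have "x + A *v of_int_vec z = A *v (Ai *v (A0 *v (Ainv *v x) + A0 *v of_int_vec z))"
      using Ai Ainv by (simp add: matrix_vector_mul_assoc matrix_mul_assoc matrix_vector_right_distrib)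
    hence "norm (x + A *v of_int_vec z) \<le> (1 + k * norm (A - A0)) * norm (A0 *v (Ainv *v x) + A0 *v of_int_vec z)"
      using stretch by simp
    also have "\<dots> \<le> (1 + k * norm (A - A0)) * r"
      using z k by (intro mult_left_mono) auto
    finally have "norm (x + A *v of_int_vec z) \<le> (1 + k * norm (A - A0)) * r" .
    thus ?thesis unfolding lattice_of_eq by (auto simp: mult.commute)
  qed
  thus ?thesis using k unfolding covering_radius_le_def by blast
qed

definition Xm_covering_lt :: "real \<Rightarrow> (real^'m) set set" where
  "Xm_covering_lt R = {L \<in> Xm. \<exists>r<R. covering_radius_le L r}"

lemma openin_Xm_top_iff:
  "openin (Xm_top :: (real^'m) set topology) U
     \<longleftrightarrow> U \<subseteq> Xm \<and> openin (top_of_set (unimod :: (real^'m^'m) set)) {A \<in> unimod. lattice_of A \<in> U}"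
proof -
  define P where "P U \<longleftrightarrow> U \<subseteq> Xm \<and>
    openin (top_of_set (unimod :: (real^'m^'m) set)) {A \<in> unimod. lattice_of A \<in> U}" for U
  have "istopology P"
    unfolding istopology_def
  proof (intro conjI allI impI)
    fix S T :: "(real^'m) set set" assume "P S" "P T"
    moreover have "{A \<in> (unimod :: (real^'m^'m) set). lattice_of A \<in> S \<inter> T}
       = {A \<in> unimod. lattice_of A \<in> S} \<inter> {A \<in> unimod. lattice_of A \<in> T}" by auto
    ultimately show "P (S \<inter> T)" unfolding P_def by (auto intro: openin_Int)
  next
    fix KK :: "(real^'m) set set set" assume KK: "\<forall>K\<in>KK. P K"
    have "{A \<in> (unimod :: (real^'m^'m) set). lattice_of A \<in> \<Union>KK}
        = (\<Union>K\<in>KK. {A \<in> unimod. lattice_of A \<in> K})" by auto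
    moreover have "openin (top_of_set unimod) (\<Union>K\<in>KK. {A \<in> (unimod :: (real^'m^'m) set). lattice_of A \<in> K})"
      using KK unfolding P_def by (intro openin_Union) auto
    ultimately show "P (\<Union>KK)" using KK unfolding P_def by auto
  qed
  moreover have "Xm_top = topology P" unfolding Xm_top_def P_def ..
  ultimately have "openin Xm_top = P" by (metis topology_inverse')
  thus ?thesis unfolding P_def by simp
qed

lemma openin_Xm_covering_lt: "openin (Xm_top :: (real^'m) set topology) (Xm_covering_lt R)"
  unfolding openin_Xm_top_iff
proof (intro conjI)
  show "Xm_covering_lt R \<subseteq> Xm" unfolding Xm_covering_lt_def by auto
  let ?S = "{A \<in> (unimod :: (real^'m^'m) set). lattice_of A \<in> Xm_covering_lt R}"
  show "openin (top_of_set unimod) ?S"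
    unfolding openin_euclidean_subtopology_iff
  proof (intro conjI ballI)
    show "?S \<subseteq> unimod" by auto
    fix A0 assume A0: "A0 \<in> ?S"
    then obtain r where r: "r < R" "covering_radius_le (lattice_of A0) r"
      unfolding Xm_covering_lt_def by auto
    have r0: "0 \<le> r" using covering_radius_le_nonneg[OF r(2)] .
    have inv: "invertible A" if "A \<in> unimod" for A :: "real^'m^'m"
      using that unfolding unimod_def by (auto simp: invertible_det_nz)
    have "invertible A0" using A0 inv by simp
    then obtain k where k: "0 \<le> k"
      "\<And>A. invertible A \<Longrightarrow> covering_radius_le (lattice_of A) (r * (1 + k * norm (A - A0)))"
      using covering_radius_le_perturb[OF r(2)] by blast
    define e where "e = (R - r) / (r * k + 1)"
    have "0 \<le> r * k" using r0 k(1) by simp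
    hence den: "0 < r * k + 1" by linarith
    have e: "e > 0" unfolding e_def using r(1) den by simp
    show "\<exists>e>0. \<forall>A\<in>unimod. dist A A0 < e \<longrightarrow> A \<in> ?S"
    proof (intro exI[of _ e] conjI ballI impI e)
      fix A assume A: "A \<in> (unimod :: (real^'m^'m) set)" "dist A A0 < e"
      have "r * (1 + k * norm (A - A0)) \<le> r + e * (r * k)"
      proof -
        have "(r * k) * norm (A - A0) \<le> (r * k) * e"
          using A(2) r0 k(1) by (intro mult_left_mono) (auto simp: dist_norm)
        thus ?thesis by (simp add: algebra_simps)
      qed
      also have "\<dots> < R" using e den unfolding e_def by (simp add: field_simps)
      finally show "A \<in> ?S"
        using k(2)[OF inv[OF A(1)]] A(1) unfolding Xm_covering_lt_def Xm_def by auto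
    qed
  qed
qed

lemma Xm_covering_lt_mono: "R \<le> R' \<Longrightarrow> Xm_covering_lt R \<subseteq> Xm_covering_lt R'"
  unfolding Xm_covering_lt_def using less_le_trans by blast

lemma Xm_subset_Union_covering_lt: "(Xm :: (real^'m) set set) \<subseteq> (\<Union>R::nat. Xm_covering_lt (real R))"
proof
  fix L :: "(real^'m) set" assume "L \<in> Xm"
  then obtain A :: "real^'m^'m" where A: "A \<in> unimod" "L = lattice_of A" unfolding Xm_def by auto
  hence "invertible A" unfolding unimod_def by (auto simp: invertible_det_nz)
  hence "covering_radius_le L (\<Sum>i\<in>UNIV. norm (column i A))"
    unfolding A(2) by (rule covering_radius_le_lattice_of)
  moreover have "(\<Sum>i\<in>UNIV. norm (column i A)) < real (nat \<lceil>\<Sum>i\<in>UNIV. norm (column i A)\<rceil> + 1)"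
    by linarith
  ultimately show "L \<in> (\<Union>R::nat. Xm_covering_lt (real R))"
    using \<open>L \<in> Xm\<close> unfolding Xm_covering_lt_def by blast
qed

lemma compactin_Xm_covering_radius_bounded:
  assumes "compactin (Xm_top :: (real^'m) set topology) K"
  obtains R where "\<And>L. L \<in> K \<Longrightarrow> covering_radius_le L R"
proof -
  have "topspace (Xm_top :: (real^'m) set topology) \<subseteq> Xm"
    using openin_topspace[of "Xm_top :: (real^'m) set topology"] openin_Xm_top_iff by blast
  hence "K \<subseteq> Xm" using assms unfolding compactin_def by auto
  have "\<exists>FF. finite FF \<and> FF \<subseteq> range (\<lambda>R::nat. Xm_covering_lt (real R)) \<and> K \<subseteq> \<Union>FF"
    using assms unfolding compactin_def
  proof (elim conjE allE impE)
    show "(\<forall>U\<in>range (\<lambda>R::nat. Xm_covering_lt (real R)). openin Xm_top U)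
        \<and> K \<subseteq> \<Union>(range (\<lambda>R::nat. Xm_covering_lt (real R)))"
      using openin_Xm_covering_lt Xm_subset_Union_covering_lt \<open>K \<subseteq> Xm\<close> by blast
  qed auto
  then obtain RR where RR: "finite RR" "K \<subseteq> (\<Union>R\<in>RR. Xm_covering_lt (real R))"
    by (metis finite_subset_image)
  have "K \<subseteq> Xm_covering_lt (real (Max (insert 0 RR)))"
  proof
    fix L assume "L \<in> K"
    then obtain R where "R \<in> RR" "L \<in> Xm_covering_lt (real R)" using RR(2) by auto
    moreover have "R \<le> Max (insert 0 RR)" using RR(1) \<open>R \<in> RR\<close> by simp
    ultimately show "L \<in> Xm_covering_lt (real (Max (insert 0 RR)))"
      using Xm_covering_lt_mono[of "real R" "real (Max (insert 0 RR))"] by auto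
  qed
  hence "covering_radius_le L (real (Max (insert 0 RR)))" if "L \<in> K" for L
    using that covering_radius_le_mono unfolding Xm_covering_lt_def by (blast dest: less_imp_le)
  thus ?thesis by (rule that)
qed

section \<open>Power means of nearby families\<close>

lemma uniformly_continuous_powr_Icc:
  fixes a e M :: real
  assumes "a > 0" "e > 0"
  obtains d where "d > 0" "\<And>t t'. t \<in> {0..M} \<Longrightarrow> t' \<in> {0..M} \<Longrightarrow> dist t' t < d \<Longrightarrow>
    dist (t' powr a) (t powr a) < e"
proof -
  have "continuous_on {0..M} (\<lambda>t::real. t powr a)"
    by (rule continuous_on_powr') (use assms in \<open>auto intro: continuous_intros\<close>)
  hence "uniformly_continuous_on {0..M} (\<lambda>t::real. t powr a)"
    by (rule compact_uniformly_continuous) simp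
  thus ?thesis using that assms(2) unfolding uniformly_continuous_on_def by metis
qed

lemma average_le_average_add:
  assumes "finite C" "C \<noteq> {}" "\<And>x. x \<in> C \<Longrightarrow> f x \<le> g x + e"
  shows "average C f \<le> average C g + e"
proof -
  have "(\<Sum>x\<in>C. f x) \<le> (\<Sum>x\<in>C. g x) + real (card C) * e"
    using sum_mono[of C f "\<lambda>x. g x + e", OF assms(3)] by (simp add: sum.distrib)
  thus ?thesis using assms(1,2) unfolding average_def by (simp add: field_simps card_gt_0_iff)
qed

lemma powr_shift_close:
  fixes \<alpha> :: real
  assumes cont: "\<And>t t'. t \<in> {0..M} \<Longrightarrow> t' \<in> {0..M} \<Longrightarrow> dist t' t < \<delta> \<Longrightarrow> dist (t' powr \<alpha>) (t powr \<alpha>) < \<eta>"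
    and "0 \<le> x" "x + c \<le> M" "0 \<le> c" "c < \<delta>"
  shows "(x + c) powr \<alpha> \<le> x powr \<alpha> + \<eta>" "x powr \<alpha> \<le> max 0 (x - c) powr \<alpha> + \<eta>"
proof -
  show "(x + c) powr \<alpha> \<le> x powr \<alpha> + \<eta>"
    using cont[of x "x + c"] assms(2-5) by (simp add: dist_real_def abs_less_iff)
  have "\<bar>max 0 (x - c) - x\<bar> \<le> c" using assms(2,4) by auto
  thus "x powr \<alpha> \<le> max 0 (x - c) powr \<alpha> + \<eta>"
    using cont[of x "max 0 (x - c)"] assms(2-5) by (simp add: dist_real_def abs_less_iff)
qed

lemma power_mean_sandwich:
  fixes B \<alpha> \<epsilon> :: real
  assumes "\<alpha> > 0" "\<epsilon> > 0"
  obtains \<delta> where "\<delta> > 0"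
    "\<And>(C :: 'a set) \<Phi> c I. finite C \<Longrightarrow> C \<noteq> {} \<Longrightarrow> (\<And>Y. Y \<in> C \<Longrightarrow> 0 \<le> \<Phi> Y \<and> \<Phi> Y \<le> B) \<Longrightarrow>
       0 \<le> c \<Longrightarrow> c < \<delta> \<Longrightarrow> I \<le> average C (\<lambda>Y. (\<Phi> Y + c) powr \<alpha>) \<Longrightarrow>
       average C (\<lambda>Y. max 0 (\<Phi> Y - c) powr \<alpha>) \<le> I \<Longrightarrow>
       \<bar>I powr (1 / \<alpha>) - average C (\<lambda>Y. \<Phi> Y powr \<alpha>) powr (1 / \<alpha>)\<bar> < \<epsilon>"
proof -
  define M where "M = max B 0 + 1"
  obtain \<eta> where \<eta>: "\<eta> > 0" "\<And>u u'. u \<in> {0..M powr \<alpha>} \<Longrightarrow> u' \<in> {0..M powr \<alpha>} \<Longrightarrow>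
      dist u' u < \<eta> \<Longrightarrow> dist (u' powr (1 / \<alpha>)) (u powr (1 / \<alpha>)) < \<epsilon>"
    using uniformly_continuous_powr_Icc[of "1 / \<alpha>" \<epsilon> "M powr \<alpha>"] assms by auto
  obtain \<delta> where \<delta>: "\<delta> > 0" "\<And>t t'. t \<in> {0..M} \<Longrightarrow> t' \<in> {0..M} \<Longrightarrow>
      dist t' t < \<delta> \<Longrightarrow> dist (t' powr \<alpha>) (t powr \<alpha>) < \<eta> / 2"
    using uniformly_continuous_powr_Icc[of \<alpha> "\<eta> / 2" M] assms \<eta>(1) by auto
  show ?thesis
  proof (rule that[of "min \<delta> 1"])
    fix C :: "'a set" and \<Phi> c I
    assume C: "finite C" "C \<noteq> {}" and \<Phi>: "\<And>Y. Y \<in> C \<Longrightarrow> 0 \<le> \<Phi> Y \<and> \<Phi> Y \<le> B"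
      and c: "0 \<le> c" "c < min \<delta> 1" and upper: "I \<le> average C (\<lambda>Y. (\<Phi> Y + c) powr \<alpha>)"
      and lower: "average C (\<lambda>Y. max 0 (\<Phi> Y - c) powr \<alpha>) \<le> I"
    define S where "S = average C (\<lambda>Y. \<Phi> Y powr \<alpha>)"
    have close: "(\<Phi> Y + c) powr \<alpha> \<le> \<Phi> Y powr \<alpha> + \<eta> / 2"
      "\<Phi> Y powr \<alpha> \<le> max 0 (\<Phi> Y - c) powr \<alpha> + \<eta> / 2" if "Y \<in> C" for Y
      using powr_shift_close[where M = M and \<delta> = \<delta> and \<eta> = "\<eta> / 2" and x = "\<Phi> Y" and c = c, OF \<delta>(2)] \<Phi>[OF that] c unfolding M_def by auto
    have le_M: "(\<Phi> Y + c) powr \<alpha> \<le> M powr \<alpha> + 0" "\<Phi> Y powr \<alpha> \<le> M powr \<alpha> + 0" if "Y \<in> C" for Y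
      using \<Phi>[OF that] c \<open>\<alpha> > 0\<close> unfolding M_def by (auto intro!: powr_mono2)
    have "average C (\<lambda>Y. M powr \<alpha>) = M powr \<alpha>" using C by (simp add: average_def card_gt_0_iff)
    moreover have "average C (\<lambda>Y. (\<Phi> Y + c) powr \<alpha>) \<le> S + \<eta> / 2"
      "S \<le> average C (\<lambda>Y. max 0 (\<Phi> Y - c) powr \<alpha>) + \<eta> / 2"
      "average C (\<lambda>Y. (\<Phi> Y + c) powr \<alpha>) \<le> average C (\<lambda>Y. M powr \<alpha>) + 0"
      "S \<le> average C (\<lambda>Y. M powr \<alpha>) + 0"
      unfolding S_def using close le_M by (intro average_le_average_add[OF C]; blast)+
    moreover have "0 \<le> I" using order_trans[OF _ lower] by (simp add: average_def sum_nonneg)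
    moreover have "0 \<le> S" unfolding S_def by (simp add: average_def sum_nonneg)
    ultimately show "\<bar>I powr (1 / \<alpha>) - S powr (1 / \<alpha>)\<bar> < \<epsilon>"
      using \<eta>(2)[of S I] \<eta>(1) upper lower by (simp add: dist_real_def)
  qed (use \<delta>(1) in simp)
qed

lemma index_large_scale_small:
  assumes "\<kappa> > 0"
  obtains N :: nat where "\<And>H :: (int^'m) set. index_Zm H > N \<Longrightarrow> real CARD('m) * scale H < \<kappa>"
proof
  fix H :: "(int^'m) set"
  define n where "n = real CARD('m)"
  have n: "n > 0" unfolding n_def by simp
  assume "nat \<lceil>(n / \<kappa>) powr n\<rceil> < index_Zm H"
  hence "(n / \<kappa>) powr n < real (index_Zm H)" by linarith
  hence "((n / \<kappa>) powr n) powr (1 / n) < real (index_Zm H) powr (1 / n)"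
    using n assms by (intro powr_less_mono2) auto
  hence "n / \<kappa> < real (index_Zm H) powr (1 / n)" using n assms by (simp add: powr_powr)
  hence "inverse (real (index_Zm H) powr (1 / n)) < inverse (n / \<kappa>)"
    using n assms by (intro less_imp_inverse_less) auto
  hence "scale H < \<kappa> / n" unfolding scale_def n_def by (simp add: powr_minus[symmetric])
  thus "real CARD('m) * scale H < \<kappa>" using n unfolding n_def by (simp add: field_simps)
qed

text \<open>The uniformity in \<open>H\<close> comes from the covering radius bound \<open>R\<close>, which bounds the quotient
  gauge and hence every term of both power means.\<close>
lemma xi_G_zeta_L_close_of_fine_scale:
  assumes "\<alpha> > 0" "\<epsilon> > 0"
  obtains \<delta> where "\<delta> > 0" "\<And>H :: (int^'m) set. finite_index_subgroup H \<Longrightarrow>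
    covering_radius_le (lattice_bar H) R \<Longrightarrow> real CARD('m) * scale H < \<delta> \<Longrightarrow>
    \<bar>scale H * xi_G d \<alpha> H - zeta_L d \<alpha> (lattice_bar H)\<bar> < \<epsilon>"
proof -
  define B where "B = real CARD('m) * (4 * R + 1)"
  obtain \<delta> where "\<delta> > 0" and sandwich: "\<And>(C :: (int^'m) set set) \<Phi> c I. finite C \<Longrightarrow> C \<noteq> {} \<Longrightarrow>
      (\<And>Y. Y \<in> C \<Longrightarrow> 0 \<le> \<Phi> Y \<and> \<Phi> Y \<le> B) \<Longrightarrow> 0 \<le> c \<Longrightarrow> c < \<delta> \<Longrightarrow>
      I \<le> average C (\<lambda>Y. (\<Phi> Y + c) powr \<alpha>) \<Longrightarrow> average C (\<lambda>Y. max 0 (\<Phi> Y - c) powr \<alpha>) \<le> I \<Longrightarrow>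
      \<bar>I powr (1 / \<alpha>) - average C (\<lambda>Y. \<Phi> Y powr \<alpha>) powr (1 / \<alpha>)\<bar> < \<epsilon>"
    using power_mean_sandwich[OF assms] by blast
  show ?thesis
  proof (rule that[OF \<open>\<delta> > 0\<close>])
    fix H :: "(int^'m) set"
    assume "finite_index_subgroup H" "covering_radius_le (lattice_bar H) R"
      and small: "real CARD('m) * scale H < \<delta>"
    interpret finite_index_Zm H by unfold_locales fact
    have bounded: "\<forall>x. quot_gauge d (lattice_bar H) x \<le> ereal B"
      unfolding B_def by (intro allI quot_gauge_le_of_covering additive_subgroup_lattice_bar) fact
    have "\<bar>mean_quot_gauge_powr d \<alpha> (lattice_bar H) powr (1 / \<alpha>)
        - average (cosets_Zm H) (\<lambda>Y. coset_gauge d Y powr \<alpha>) powr (1 / \<alpha>)\<bar> < \<epsilon>"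
      using finite_cosets coset_in_cosets_Zm[of 0 H] quot_gauge_bounded_real[OF bounded] scale_pos small
        mean_quot_gauge_powr_bounds[OF bounded \<open>\<alpha> > 0\<close>]
      unfolding coset_gauge_def by (intro sandwich) auto
    thus "\<bar>scale H * xi_G d \<alpha> H - zeta_L d \<alpha> (lattice_bar H)\<bar> < \<epsilon>"
      using scale_mult_xi_G[OF bounded \<open>\<alpha> > 0\<close>] unfolding zeta_L_eq_mean_quot_gauge_powr
      by (simp add: abs_minus_commute)
  qed
qed

theorem lemma3p4:
  fixes directed :: bool and \<alpha> :: real and K :: "(real^'m) set set"
  assumes "CARD('m) \<ge> 2"
    and "\<alpha> > 0"
    and "compactin (Xm_top :: (real^'m) set topology) K"
  shows "\<forall>\<epsilon>>0. \<exists>N::nat. \<forall>H :: (int^'m) set.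
           finite_index_subgroup H \<and> lattice_bar H \<in> K \<and> index_Zm H > N \<longrightarrow>
           \<bar>real (index_Zm H) powr (- 1 / real CARD('m)) * xi_G directed \<alpha> H
              - zeta_L directed \<alpha> (lattice_bar H)\<bar> < \<epsilon>"
proof (intro allI impI)
  fix \<epsilon> :: real assume "\<epsilon> > 0"
  obtain R where R: "\<And>L. L \<in> K \<Longrightarrow> covering_radius_le L R"
    using compactin_Xm_covering_radius_bounded[OF assms(3)] by blast
  obtain \<delta> where "\<delta> > 0" and close: "\<And>H :: (int^'m) set. finite_index_subgroup H \<Longrightarrow>
      covering_radius_le (lattice_bar H) R \<Longrightarrow> real CARD('m) * scale H < \<delta> \<Longrightarrow>
      \<bar>scale H * xi_G directed \<alpha> H - zeta_L directed \<alpha> (lattice_bar H)\<bar> < \<epsilon>"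
    using xi_G_zeta_L_close_of_fine_scale[OF assms(2) \<open>\<epsilon> > 0\<close>] by blast
  obtain N where "\<And>H :: (int^'m) set. index_Zm H > N \<Longrightarrow> real CARD('m) * scale H < \<delta>"
    using index_large_scale_small[OF \<open>\<delta> > 0\<close>] by blast
  thus "\<exists>N::nat. \<forall>H :: (int^'m) set. finite_index_subgroup H \<and> lattice_bar H \<in> K \<and> index_Zm H > N \<longrightarrow>
      \<bar>real (index_Zm H) powr (- 1 / real CARD('m)) * xi_G directed \<alpha> H
        - zeta_L directed \<alpha> (lattice_bar H)\<bar> < \<epsilon>"
    using close R unfolding scale_def by blast
qed

end
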